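(* Let $n\ge3$. Consider the action on complex symmetric $n\times n$ matrices $H$ given by $H\mapsto a\bar d\,BHB^\tau$, where $B=\begin{pmatrix}V&c\\0&d\end{pmatrix}$ with $c\in\mathbb{C}^{n-1}$, $d\in\mathbb{C}\setminus\{0\}$, $a>0$ and $\sqrt a\,V\in U(\mathbb{C}^{n-1})$ (these are exactly the changes of bases preserving the normalized Levi form $\tilde I=\operatorname{diag}(1,\dots,1,0)$, acting on the matrix $H=(h_{\bar\alpha\bar\beta n})$ of the third order tensor of a hypersurface at a point where the Levi form has rank $n-1$ and is semidefinite). Then every symmetric $H$ can be brought by this action to precisely one of the following block matrices: (i) $\begin{pmatrix}D_{n-1}(\lambda)&e_{n-1}\\ e_{n-1}^\tau&0\end{pmatrix}$ with $\lambda=(1,\lambda_2,\dots,\lambda_{n-2},0)$, $1\ge\lambda_2\ge\dots\ge\lambda_{n-2}\ge0$, or $\lambda=0$; (ii) $\begin{pmatrix}D_{n-1}(\lambda)&0\\0&0\end{pmatrix}$ with $\lambda=(1,\lambda_2,\dots,\lambda_{n-1})$, $1\ge\lambda_2\ge\dots\ge\lambda_{n-1}\ge0$, or $\lambda=0$; (iii) $\begin{pmatrix}D_{n-1}(\lambda)&0\\0&1\end{pmatrix}$ with $\lambda=(1,\lambda_2,\dots,\lambda_{n-1})$, $1\ge\lambda_2\ge\dots\ge\lambda_{n-1}\ge0$, or $\lambda=0$; with the form and $\lambda$ uniquely determined. For $n=2$ the same holds with: in (i) only $\lambda=0$; in (ii) and (iii) $\lambda\in\{0,1\}$.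
   Context: $D_{n-1}(\lambda)$ is the diagonal $(n-1)\times(n-1)$ matrix with diagonal $\lambda$; $e_{n-1}=(0,\dots,0,1)^\tau\in\mathbb{C}^{n-1}$ (for $n=2$, $e_1=1$); $U(\mathbb{C}^{n-1})$ is the unitary group. *)

theory Defs
  imports Complex_Main "Jordan_Normal_Form.Matrix"
begin

text \<open>Matrices are JNF matrices, indices 0-based; the last index is n-1.\<close>

definition conj_transpose :: "complex mat \<Rightarrow> complex mat" where
  "conj_transpose U = mat (dim_col U) (dim_row U) (\<lambda>(i,j). cnj (U $$ (j,i)))"

definition unitary_mat :: "nat \<Rightarrow> complex mat \<Rightarrow> bool" where
  "unitary_mat m U \<longleftrightarrow> U \<in> carrier_mat m m \<and> U * conj_transpose U = 1\<^sub>m m"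

definition block_B :: "nat \<Rightarrow> complex mat \<Rightarrow> complex vec \<Rightarrow> complex \<Rightarrow> complex mat" where
  "block_B n V c d = mat n n (\<lambda>(i,j).
     if i < n - 1 \<and> j < n - 1 then V $$ (i,j)
     else if i < n - 1 \<and> j = n - 1 then c $ i
     else if i = n - 1 \<and> j = n - 1 then d
     else 0)"

definition admissible_params :: "nat \<Rightarrow> real \<Rightarrow> complex mat \<Rightarrow> complex vec \<Rightarrow> complex \<Rightarrow> bool" where
  "admissible_params n a V c d \<longleftrightarrow>
     a > 0 \<and> d \<noteq> 0 \<and> V \<in> carrier_mat (n - 1) (n - 1) \<and> c \<in> carrier_vec (n - 1) \<and>
     unitary_mat (n - 1) (complex_of_real (sqrt a) \<cdot>\<^sub>m V)"

definition act :: "nat \<Rightarrow> real \<Rightarrow> complex mat \<Rightarrow> complex vec \<Rightarrow> complex \<Rightarrow> complex mat \<Rightarrow> complex mat" where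
  "act n a V c d H = (complex_of_real a * cnj d) \<cdot>\<^sub>m
      (block_B n V c d * H * transpose_mat (block_B n V c d))"

text \<open>Form 1: off-diagonal e_{n-1} block (entries (n-2,n-1) and (n-1,n-2) equal 1), corner 0;
  form 2: corner 0; form 3: corner 1.\<close>
definition normal_form :: "nat \<Rightarrow> nat \<Rightarrow> real list \<Rightarrow> complex mat" where
  "normal_form n k lam = mat n n (\<lambda>(i,j).
     if i < n - 1 \<and> j < n - 1 then (if i = j then complex_of_real (lam ! i) else 0)
     else if k = 1 \<and> ((i = n - 2 \<and> j = n - 1) \<or> (i = n - 1 \<and> j = n - 2)) then 1
     else if k = 3 \<and> i = n - 1 \<and> j = n - 1 then 1
     else 0)"

definition admissible_lambda :: "nat \<Rightarrow> nat \<Rightarrow> real list \<Rightarrow> bool" where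
  "admissible_lambda n k lam \<longleftrightarrow> length lam = n - 1 \<and>
     ((\<forall>i < n - 1. lam ! i = 0) \<or>
      (lam ! 0 = 1 \<and> (\<forall>i j. i \<le> j \<longrightarrow> j < n - 1 \<longrightarrow> lam ! j \<le> lam ! i) \<and>
       (\<forall>i < n - 1. 0 \<le> lam ! i) \<and> (k = 1 \<longrightarrow> lam ! (n - 2) = 0)))"

end

theory Submission
  imports Defs "Jordan_Normal_Form.Spectral_Radius" "HOL-Combinatorics.Permutations"
begin

text \<open>Write \<open>H = (A b; b\<^sup>T h)\<close> and \<open>U = \<surd>a V\<close>, which is unitary. The corner of the transformed
  matrix is \<open>a |d|\<^sup>2 d h\<close> and, when \<open>h = 0\<close>, its last column is \<open>\<surd>a |d|\<^sup>2 U b\<close>; hence the type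
  of the normal form is decided by \<open>h \<noteq> 0\<close> (iii), \<open>h = 0 \<noteq> b\<close> (i) or \<open>h = 0 = b\<close> (ii).
  Choosing \<open>c\<close> to clear the last column, the upper left block becomes \<open>conj(d) U S U\<^sup>T\<close> with the
  Schur complement \<open>S = A - b b\<^sup>T/h\<close> in case (iii) and \<open>conj(d) U A U\<^sup>T\<close> in case (ii); in case (i)
  \<open>U\<close> first rotates \<open>b\<close> onto the last basis vector and only the block of size \<open>n - 2\<close> remains. Takagi's
  factorization \<open>U A U\<^sup>T = diag(\<sigma>)\<close>, \<open>\<sigma> \<ge> 0\<close>, of complex symmetric matrices and a rescaling then
  give \<open>\<lambda>\<close>. Conversely \<open>\<lambda>\<close> is determined: if \<open>D\<^sub>2 = w W D\<^sub>1 W\<^sup>T\<close> with \<open>W\<close> unitary, then \<open>D\<^sub>2\<^sup>2\<close> is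
  similar to \<open>|w|\<^sup>2 D\<^sub>1\<^sup>2\<close>, so normalized nonnegative diagonals agree.\<close>

lemma index_mult_mult_transpose:
  fixes A X B :: "'a :: comm_semiring_1 mat"
  assumes "A \<in> carrier_mat n p" "X \<in> carrier_mat p q" "B \<in> carrier_mat r q" "i < n" "j < r"
  shows "(A * X * transpose_mat B) $$ (i,j) = (\<Sum>k<p. \<Sum>l<q. A$$(i,k) * X$$(k,l) * B$$(j,l))"
proof -
  have "(A * X * transpose_mat B) $$ (i,j) = (\<Sum>k<p. A$$(i,k) * (\<Sum>l<q. X$$(k,l) * B$$(j,l)))"
    using assms by (simp add: scalar_prod_def atLeast0LessThan)
  also have "\<dots> = (\<Sum>k<p. \<Sum>l<q. A$$(i,k) * X$$(k,l) * B$$(j,l))"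
    by (simp add: sum_distrib_left ac_simps)
  finally show ?thesis .
qed

lemma index_mult_sum:
  assumes "A \<in> carrier_mat n p" "B \<in> carrier_mat p q" "i < n" "j < q"
  shows "(A * B) $$ (i,j) = (\<Sum>k<p. A $$ (i,k) * B $$ (k,j))"
  using assms by (simp add: scalar_prod_def atLeast0LessThan)

lemma symmetric_mat_index:
  assumes "A \<in> carrier_mat m m" "transpose_mat A = A" "i < m" "j < m"
  shows "A $$ (i,j) = A $$ (j,i)"
  using assms by (metis carrier_matD index_transpose_mat(1))

lemma transpose_congruence:
  fixes U A :: "'a :: comm_semiring_1 mat"
  assumes "U \<in> carrier_mat m m" "A \<in> carrier_mat m m"
  shows "transpose_mat (U * A * transpose_mat U) = U * transpose_mat A * transpose_mat U"
proof -
  have "transpose_mat (U * A * transpose_mat U) = U * transpose_mat (U * A)"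
    using assms by (simp only: transpose_mult[of "U * A" m m "transpose_mat U" m] transpose_transpose
        mult_carrier_mat transpose_carrier_mat)
  also have "\<dots> = U * transpose_mat A * transpose_mat U"
    using assms by (simp add: transpose_mult[of U m m A m])
  finally show ?thesis .
qed

lemma congruence_mult:
  fixes E U X :: "'a :: comm_semiring_1 mat"
  assumes "E \<in> carrier_mat m m" "U \<in> carrier_mat m m" "X \<in> carrier_mat m m"
  shows "(E * U) * X * transpose_mat (E * U) = E * (U * X * transpose_mat U) * transpose_mat E"
  using assms by (simp add: transpose_mult[OF assms(1,2)] assoc_mult_mat[of _ m m _ m _ m])

lemma congruence_smult:
  fixes U A :: "'a :: comm_semiring_1 mat"
  assumes U: "U \<in> carrier_mat m m" and A: "A \<in> carrier_mat m m"
  shows "(z \<cdot>\<^sub>m U) * A * transpose_mat (z \<cdot>\<^sub>m U) = (z * z) \<cdot>\<^sub>m (U * A * transpose_mat U)"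
proof (rule eq_matI)
  fix i j assume "i < dim_row ((z * z) \<cdot>\<^sub>m (U * A * transpose_mat U))"
    "j < dim_col ((z * z) \<cdot>\<^sub>m (U * A * transpose_mat U))"
  then have ij: "i < m" "j < m" using U by auto
  have "((z \<cdot>\<^sub>m U) * A * transpose_mat (z \<cdot>\<^sub>m U)) $$ (i,j)
      = (\<Sum>k<m. \<Sum>l<m. (z \<cdot>\<^sub>m U)$$(i,k) * A$$(k,l) * (z \<cdot>\<^sub>m U)$$(j,l))"
    using U A ij by (intro index_mult_mult_transpose) auto
  also have "\<dots> = (z * z) * (\<Sum>k<m. \<Sum>l<m. U$$(i,k) * A$$(k,l) * U$$(j,l))"
    using ij U by (simp add: sum_distrib_left ac_simps)
  also have "\<dots> = ((z * z) \<cdot>\<^sub>m (U * A * transpose_mat U)) $$ (i,j)"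
    using U A ij index_mult_mult_transpose[OF U A U ij] by simp
  finally show "((z \<cdot>\<^sub>m U) * A * transpose_mat (z \<cdot>\<^sub>m U)) $$ (i,j)
      = ((z * z) \<cdot>\<^sub>m (U * A * transpose_mat U)) $$ (i,j)" .
qed (use U in auto)

lemma conj_transpose_dims [simp]:
  "dim_row (conj_transpose A) = dim_col A" "dim_col (conj_transpose A) = dim_row A"
  by (auto simp: conj_transpose_def)

lemma conj_transpose_carrier [simp]: "conj_transpose A \<in> carrier_mat (dim_col A) (dim_row A)"
  by (auto simp: conj_transpose_def)

lemma index_conj_transpose [simp]:
  "i < dim_col A \<Longrightarrow> j < dim_row A \<Longrightarrow> conj_transpose A $$ (i,j) = cnj (A $$ (j,i))"
  by (auto simp: conj_transpose_def)

lemma transpose_conj_transpose: "transpose_mat (conj_transpose A) = map_mat cnj A"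
  by (intro eq_matI) auto

lemma conj_transpose_transpose: "conj_transpose (transpose_mat A) = map_mat cnj A"
  by (intro eq_matI) auto

lemma conj_transpose_conj_transpose [simp]: "conj_transpose (conj_transpose A) = A"
  by (intro eq_matI) auto

lemma conj_transpose_smult: "conj_transpose (z \<cdot>\<^sub>m A) = cnj z \<cdot>\<^sub>m conj_transpose A"
  by (intro eq_matI) auto

lemma conj_transpose_mult:
  assumes "A \<in> carrier_mat n k" "B \<in> carrier_mat k p"
  shows "conj_transpose (A * B) = conj_transpose B * conj_transpose A"
proof (rule eq_matI)
  fix i j assume "i < dim_row (conj_transpose B * conj_transpose A)"
    "j < dim_col (conj_transpose B * conj_transpose A)"
  then have ij: "i < p" "j < n" using assms by auto
  have "conj_transpose (A * B) $$ (i,j) = (\<Sum>l<k. cnj (B $$ (l,i)) * cnj (A $$ (j,l)))"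
    using assms ij by (simp add: scalar_prod_def atLeast0LessThan mult.commute)
  also have "\<dots> = (conj_transpose B * conj_transpose A) $$ (i,j)"
    using assms ij by (subst index_mult_sum[of _ p k _ n]) auto
  finally show "conj_transpose (A * B) $$ (i,j) = (conj_transpose B * conj_transpose A) $$ (i,j)" .
qed (use assms in auto)

lemma unitary_mat_carrier: "unitary_mat m U \<Longrightarrow> U \<in> carrier_mat m m"
  by (simp add: unitary_mat_def)

lemma unitary_mat_iff_orthonormal_rows:
  "unitary_mat m U \<longleftrightarrow> U \<in> carrier_mat m m \<and>
     (\<forall>i<m. \<forall>j<m. (\<Sum>k<m. U$$(i,k) * cnj (U$$(j,k))) = (if i = j then 1 else 0))"
proof -
  have entry: "(U * conj_transpose U) $$ (i,j) = (\<Sum>k<m. U$$(i,k) * cnj (U$$(j,k)))"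
    if "U \<in> carrier_mat m m" "i < m" "j < m" for i j
    using that by (subst index_mult_sum[of _ m m _ m]) auto
  show ?thesis
  proof (cases "U \<in> carrier_mat m m")
    case True
    have "U * conj_transpose U = 1\<^sub>m m \<longleftrightarrow>
        (\<forall>i<m. \<forall>j<m. (U * conj_transpose U) $$ (i,j) = 1\<^sub>m m $$ (i,j))"
    proof
      assume e: "U * conj_transpose U = 1\<^sub>m m"
      show "\<forall>i<m. \<forall>j<m. (U * conj_transpose U) $$ (i,j) = 1\<^sub>m m $$ (i,j)"
        unfolding e by simp
    qed (use True in \<open>auto intro!: eq_matI\<close>)
    then show ?thesis using True entry by (simp add: unitary_mat_def)
  qed (simp add: unitary_mat_def)
qed

lemma unitary_mat_orthonormal_rows:
  "unitary_mat m U \<Longrightarrow> i < m \<Longrightarrow> j < m \<Longrightarrow>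
     (\<Sum>k<m. U$$(i,k) * cnj (U$$(j,k))) = (if i = j then 1 else 0)"
  by (simp add: unitary_mat_iff_orthonormal_rows)

lemma unitary_mat_conj_transpose_mult:
  assumes "unitary_mat m U" shows "conj_transpose U * U = 1\<^sub>m m"
proof -
  have U: "U \<in> carrier_mat m m" using assms by (simp add: unitary_mat_def)
  show ?thesis
    by (rule mat_mult_left_right_inverse[OF U _ conjunct2[OF assms[unfolded unitary_mat_def]]])
      (use U in auto)
qed

lemma unitary_mat_orthonormal_cols:
  assumes "unitary_mat m U" "i < m" "j < m"
  shows "(\<Sum>k<m. cnj (U$$(k,i)) * U$$(k,j)) = (if i = j then 1 else 0)"
proof -
  have U: "U \<in> carrier_mat m m" using assms by (simp add: unitary_mat_def)
  have "(conj_transpose U * U) $$ (i,j) = (\<Sum>k<m. cnj (U$$(k,i)) * U$$(k,j))"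
    using U assms by (subst index_mult_sum[of _ m m _ m]) auto
  then show ?thesis using unitary_mat_conj_transpose_mult[OF assms(1)] assms by simp
qed

lemma transpose_mult_conj_unitary:
  assumes "unitary_mat m U" shows "transpose_mat U * map_mat cnj U = 1\<^sub>m m"
proof -
  have "transpose_mat U * map_mat cnj U = map_mat cnj (conj_transpose U * U)"
    using unitary_mat_carrier[OF assms] by (intro eq_matI) (auto simp: scalar_prod_def)
  then show ?thesis using unitary_mat_conj_transpose_mult[OF assms] by (auto intro!: eq_matI)
qed

lemma unitary_mat_one: "unitary_mat m (1\<^sub>m m)"
  by (auto simp: unitary_mat_def intro!: eq_matI)

lemma unitary_mat_mult:
  assumes "unitary_mat m U" "unitary_mat m W" shows "unitary_mat m (U * W)"
proof -
  have U: "U \<in> carrier_mat m m" and W: "W \<in> carrier_mat m m"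
    using assms by (auto simp: unitary_mat_def)
  have "conj_transpose U \<in> carrier_mat m m" "conj_transpose W \<in> carrier_mat m m"
    using U W by auto
  then have "U * W * conj_transpose (U * W) = U * (W * conj_transpose W) * conj_transpose U"
    using U W by (simp add: conj_transpose_mult[OF U W] assoc_mult_mat[of _ m m _ m _ m])
  then show ?thesis using assms U W by (simp add: unitary_mat_def)
qed

lemma unitary_mat_conj_transpose:
  assumes "unitary_mat m U" shows "unitary_mat m (conj_transpose U)"
  using assms unitary_mat_conj_transpose_mult[OF assms]
  by (auto simp: unitary_mat_def dest: carrier_matD)

lemma unimodular_mult_cnj: "cmod z = 1 \<Longrightarrow> z * cnj z = 1"
  by (metis complex_norm_square mult.commute of_real_1 power_one)

lemma unitary_mat_smult:
  assumes "unitary_mat m U" "cmod z = 1" shows "unitary_mat m (z \<cdot>\<^sub>m U)"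
proof -
  have U: "U \<in> carrier_mat m m" using assms by (simp add: unitary_mat_def)
  have "(z \<cdot>\<^sub>m U) * conj_transpose (z \<cdot>\<^sub>m U) = (z * cnj z) \<cdot>\<^sub>m (U * conj_transpose U)"
    using U conj_transpose_carrier[of U] by (simp add: conj_transpose_smult mult_smult_assoc_mat[of _ m m _ m]
        mult_smult_distrib[of _ m m _ m]) (auto intro!: eq_matI)
  also have "\<dots> = 1\<^sub>m m"
    using assms U unimodular_mult_cnj[OF assms(2)] by (auto simp: unitary_mat_def intro!: eq_matI)
  finally show ?thesis using U by (simp add: unitary_mat_def)
qed

lemma unimodular_phase: "\<exists>\<phi>. cmod \<phi> = 1 \<and> cnj \<phi> * z = of_real (cmod z)"
proof (cases "z = 0")
  case False
  have "cnj z * z = of_real (cmod z) * of_real (cmod z)"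
    by (simp add: mult.commute[of "cnj z"] complex_norm_square[symmetric] power2_eq_square)
  then have "cnj (z / of_real (cmod z)) * z = of_real (cmod z)"
    using False by simp
  moreover have "cmod (z / of_real (cmod z)) = 1" using False by (simp add: norm_divide)
  ultimately show ?thesis by blast
qed (intro exI[of _ 1], auto)

lemma sum_mult_cnj: "(\<Sum>k\<in>K. w k * cnj (w k)) = of_real (\<Sum>k\<in>K. (cmod (w k))^2)"
  unfolding of_real_sum by (intro sum.cong refl) (metis complex_norm_square)

lemma sum_cmod_sq_pos:
  assumes "k0 < (m::nat)" "w k0 \<noteq> 0" shows "(\<Sum>k<m. (cmod (w k))^2) > 0"
proof -
  have "(cmod (w k0))^2 \<le> (\<Sum>k<m. (cmod (w k))^2)"
    using assms by (intro member_le_sum) auto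
  moreover have "(cmod (w k0))^2 > 0" using assms by simp
  ultimately show ?thesis by linarith
qed

lemma sum_delta_mult: "i < (m::nat) \<Longrightarrow> (\<Sum>k<m. (if i = k then 1 else 0) * f k) = (f i :: complex)"
  by (simp add: if_distrib[of "\<lambda>x. x * _"] cong: if_cong)

lemma unitary_mat_householder:
  fixes w :: "nat \<Rightarrow> complex"
  assumes r: "r * (\<Sum>k<m. (cmod (w k))^2) = 2"
  shows "unitary_mat m (mat m m (\<lambda>(i,j). (if i = j then 1 else 0) - of_real r * w i * cnj (w j)))"
    (is "unitary_mat m ?P")
  unfolding unitary_mat_iff_orthonormal_rows
proof (intro conjI allI impI)
  show "?P \<in> carrier_mat m m" by simp
  fix i j assume ij: "i < m" "j < m"
  define N where "N = (\<Sum>k<m. w k * cnj (w k))"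
  have "of_real r * N = of_real (r * (\<Sum>k<m. (cmod (w k))^2))"
    unfolding N_def sum_mult_cnj of_real_mult ..
  then have rN: "of_real r * N = 2" using r by simp
  have "(\<Sum>k<m. ?P$$(i,k) * cnj (?P$$(j,k))) =
      (\<Sum>k<m. (if i = k then 1 else 0) * (if j = k then 1 else 0)
        - (if i = k then 1 else 0) * (of_real r * cnj (w j) * w k)
        - (if j = k then 1 else 0) * (of_real r * w i * cnj (w k))
        + (of_real r * of_real r * w i * cnj (w j)) * (w k * cnj (w k)))"
    using ij by (intro sum.cong refl) (auto simp: algebra_simps)
  also have "\<dots> = (if i = j then 1 else 0) - of_real r * cnj (w j) * w i - of_real r * w i * cnj (w j)
      + of_real r * of_real r * w i * cnj (w j) * N"
    using sum_delta_mult[OF ij(1), of "\<lambda>k. if j = k then 1 else 0"]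
      sum_delta_mult[OF ij(1), of "\<lambda>k. of_real r * cnj (w j) * w k"]
      sum_delta_mult[OF ij(2), of "\<lambda>k. of_real r * w i * cnj (w k)"]
    by (simp add: sum.distrib sum_subtractf N_def sum_distrib_left del: of_real_mult)
  also have "\<dots> = (if i = j then 1 else 0)"
    using rN by (simp add: algebra_simps)
  finally show "(\<Sum>k<m. ?P$$(i,k) * cnj (?P$$(j,k))) = (if i = j then 1 else 0)" .
qed

text \<open>The witness is \<open>-\<phi>\<close> times the Householder reflection along \<open>w = conj(\<phi>) x + e\<^sub>l\<close>, with
  the phase \<open>\<phi>\<close> chosen to make \<open>conj(\<phi>) x\<^sub>l\<close> real and nonnegative.\<close>
lemma unitary_completion:
  assumes m: "0 < m" and x: "(\<Sum>k<m. (cmod (x k))^2) = 1"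
  shows "\<exists>P. unitary_mat m P \<and> (\<forall>i<m. P $$ (i, m - 1) = x i)"
proof -
  define l where "l = m - 1"
  have l: "l < m" using m by (simp add: l_def)
  obtain \<phi> where \<phi>: "cmod \<phi> = 1" and \<phi>x: "cnj \<phi> * x l = of_real (cmod (x l))"
    using unimodular_phase by blast
  define r where "r = cmod (x l)"
  define y where "y i = cnj \<phi> * x i" for i
  define w where "w i = y i + (if i = l then 1 else 0)" for i
  have yl: "y l = of_real r" using \<phi>x by (simp add: y_def r_def)
  have y: "(\<Sum>k<m. (cmod (y k))^2) = 1" using x \<phi> by (simp add: y_def norm_mult)
  have "(cmod (w k))^2 = (cmod (y k))^2 + (if k = l then 2 * r + 1 else 0)" for k
  proof (cases "k = l")
    case True
    then have "cmod (w k) = r + 1" by (simp add: w_def yl r_def flip: of_real_add)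
    then show ?thesis using True yl by (simp add: power2_eq_square algebra_simps r_def)
  qed (simp add: w_def)
  then have N: "(\<Sum>k<m. (cmod (w k))^2) = 2 * r + 2"
    using l y by (simp add: sum.distrib)
  define c where "c = 1 / (r + 1)"
  have r0: "r \<ge> 0" by (simp add: r_def)
  have c: "c * (\<Sum>k<m. (cmod (w k))^2) = 2" using r0 by (simp add: N c_def field_simps)
  define P where "P = (- \<phi>) \<cdot>\<^sub>m mat m m (\<lambda>(i,j). (if i = j then 1 else 0) - of_real c * w i * cnj (w j))"
  have "unitary_mat m P"
    unfolding P_def using \<phi> by (intro unitary_mat_smult unitary_mat_householder[OF c]) auto
  moreover have "P $$ (i, l) = x i" if i: "i < m" for i
  proof -
    have "cnj (w l) = of_real (r + 1)" by (simp add: w_def yl)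
    then have "of_real c * cnj (w l) = of_real (c * (r + 1))" by simp
    then have "of_real c * cnj (w l) = 1" using r0 by (simp add: c_def)
    then have "P $$ (i, l) = - \<phi> * ((if i = l then 1 else 0) - w i)"
      using i l by (simp add: P_def mult.assoc)
    also have "\<dots> = \<phi> * y i" by (simp add: w_def)
    also have "\<dots> = x i" using unimodular_mult_cnj[OF \<phi>] by (simp add: y_def mult.assoc[symmetric])
    finally show ?thesis .
  qed
  ultimately show ?thesis unfolding l_def by blast
qed

lemma unitary_aligning_vector:
  assumes m: "0 < m" and x: "k0 < m" "x k0 \<noteq> 0"
  shows "\<exists>U r. unitary_mat m U \<and> r > 0 \<and>
    (\<forall>i<m. (\<Sum>k<m. U$$(i,k) * x k) = (if i = m - 1 then of_real r else 0))"
proof -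
  define r where "r = sqrt (\<Sum>k<m. (cmod (x k))^2)"
  have r: "r > 0" using sum_cmod_sq_pos[of k0 m x, OF x] by (simp add: r_def)
  have "(\<Sum>k<m. (cmod (x k / of_real r))^2) = 1"
    using r sum_cmod_sq_pos[of k0 m x, OF x]
    by (simp add: r_def norm_divide power_divide sum_divide_distrib[symmetric])
  then obtain P where P: "unitary_mat m P" and Px: "\<forall>i<m. P $$ (i, m - 1) = x i / of_real r"
    using unitary_completion[OF m, of "\<lambda>k. x k / of_real r"] by blast
  have "(\<Sum>k<m. conj_transpose P $$ (i,k) * x k) = (if i = m - 1 then of_real r else 0)"
    if i: "i < m" for i
  proof -
    have "(\<Sum>k<m. conj_transpose P $$ (i,k) * x k) = of_real r * (\<Sum>k<m. cnj (P$$(k,i)) * P$$(k,m - 1))"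
      using i r Px unitary_mat_carrier[OF P] by (simp add: sum_distrib_left)
    then show ?thesis using unitary_mat_orthonormal_cols[OF P i, of "m - 1"] m by simp
  qed
  then show ?thesis using unitary_mat_conj_transpose[OF P] r by blast
qed

section \<open>Takagi factorization\<close>

lemma takagi_vector_normalize:
  assumes k0: "k0 < m" "w k0 \<noteq> 0"
    and w: "\<forall>i<m. (\<Sum>k<m. A$$(i,k) * cnj (w k)) = of_real \<sigma> * w i"
  shows "\<exists>x. (\<Sum>k<m. (cmod (x k))^2) = 1 \<and> (\<forall>i<m. (\<Sum>k<m. A$$(i,k) * cnj (x k)) = of_real \<sigma> * x i)"
proof -
  define \<rho> where "\<rho> = sqrt (\<Sum>k<m. (cmod (w k))^2)"
  have \<rho>: "\<rho> > 0" using sum_cmod_sq_pos[of k0 m w, OF k0] by (simp add: \<rho>_def)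
  define x where "x k = w k / of_real \<rho>" for k
  have "(\<Sum>k<m. (cmod (x k))^2) = (\<Sum>k<m. (cmod (w k))^2) / \<rho>^2"
    by (simp add: x_def norm_divide power_divide sum_divide_distrib)
  also have "\<dots> = 1" using sum_cmod_sq_pos[of k0 m w, OF k0] by (simp add: \<rho>_def)
  finally have "(\<Sum>k<m. (cmod (x k))^2) = 1" .
  moreover have "(\<Sum>k<m. A$$(i,k) * cnj (x k)) = of_real \<sigma> * x i" if "i < m" for i
    using w that by (simp add: x_def sum_divide_distrib[symmetric])
  ultimately show ?thesis by blast
qed

text \<open>For symmetric \<open>A\<close>, \<open>A conj(A) v = \<mu> v\<close> gives \<open>\<mu> \<parallel>v\<parallel>\<^sup>2 = \<parallel>conj(A) v\<parallel>\<^sup>2\<close>.\<close>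
lemma eigenvalue_mult_conj_nonneg:
  fixes A :: "complex mat"
  assumes A: "A \<in> carrier_mat m m" "transpose_mat A = A" and k0: "k0 < m" "v k0 \<noteq> 0"
    and ev: "\<forall>i<m. (\<Sum>l<m. A$$(i,l) * (\<Sum>k<m. cnj (A$$(l,k)) * v k)) = \<mu> * v i"
  shows "\<exists>t\<ge>0. \<mu> = of_real t"
proof -
  define y where "y l = (\<Sum>k<m. cnj (A$$(l,k)) * v k)" for l
  define S T where "S = (\<Sum>i<m. (cmod (v i))^2)" and "T = (\<Sum>l<m. (cmod (y l))^2)"
  have "\<mu> * (\<Sum>i<m. v i * cnj (v i)) = (\<Sum>i<m. cnj (v i) * (\<Sum>l<m. A$$(i,l) * y l))"
    using ev by (simp add: y_def sum_distrib_left ac_simps)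
  also have "\<dots> = (\<Sum>i<m. \<Sum>l<m. y l * (A$$(l,i) * cnj (v i)))"
    using symmetric_mat_index[OF A] by (simp add: sum_distrib_left ac_simps)
  also have "\<dots> = (\<Sum>l<m. y l * (\<Sum>i<m. A$$(l,i) * cnj (v i)))"
    by (subst sum.swap) (simp add: sum_distrib_left)
  also have "\<dots> = (\<Sum>l<m. y l * cnj (y l))" by (simp add: y_def)
  finally have "\<mu> * of_real S = of_real T"
    by (simp only: S_def T_def sum_mult_cnj)
  moreover have "S > 0" "T \<ge> 0" unfolding S_def T_def using sum_cmod_sq_pos[of k0 m v, OF k0]
    by (auto intro: sum_nonneg)
  ultimately have "\<mu> = of_real (T / S)" "T / S \<ge> 0" by (simp_all add: field_simps)
  then show ?thesis by blast
qed

text \<open>With \<open>\<sigma>\<^sup>2\<close> an eigenvalue of \<open>A conj(A)\<close> and \<open>v\<close> an eigenvector, \<open>A conj(v) + \<sigma> v\<close>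
  satisfies the required equation; if it vanishes, \<open>i v\<close> does.\<close>
lemma takagi_vector_exists:
  fixes A :: "complex mat"
  assumes A: "A \<in> carrier_mat m m" "transpose_mat A = A" and m: "0 < m"
  shows "\<exists>x \<sigma>. \<sigma> \<ge> 0 \<and> (\<Sum>k<m. (cmod (x k))^2) = 1 \<and>
     (\<forall>i<m. (\<Sum>k<m. A$$(i,k) * cnj (x k)) = of_real \<sigma> * x i)"
proof -
  have C: "A * map_mat cnj A \<in> carrier_mat m m" using A by simp
  obtain \<mu> where "\<mu> \<in> spectrum (A * map_mat cnj A)" using spectrum_non_empty[OF C m] by blast
  then obtain v where "eigenvector (A * map_mat cnj A) v \<mu>"
    by (auto simp: spectrum_def eigenvalue_def)
  then have v: "v \<in> carrier_vec m" "v \<noteq> 0\<^sub>v m" and Cv: "(A * map_mat cnj A) *\<^sub>v v = \<mu> \<cdot>\<^sub>v v"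
    using C by (auto simp: eigenvector_def)
  obtain k0 where k0: "k0 < m" "v $ k0 \<noteq> 0" using v by (metis eq_vecI carrier_vecD index_zero_vec)
  have ev: "(\<Sum>l<m. A$$(i,l) * (\<Sum>k<m. cnj (A$$(l,k)) * v $ k)) = \<mu> * v $ i" if "i < m" for i
  proof -
    have "((A * map_mat cnj A) *\<^sub>v v) $ i = (\<Sum>l<m. A$$(i,l) * (\<Sum>k<m. cnj (A$$(l,k)) * v $ k))"
      using that A v by (simp add: scalar_prod_def atLeast0LessThan)
    then show ?thesis using Cv that v by simp
  qed
  obtain t where t: "t \<ge> 0" "\<mu> = of_real t"
    using eigenvalue_mult_conj_nonneg[OF A, where v="\<lambda>k. v $ k", OF k0] ev by blast
  define \<sigma> where "\<sigma> = sqrt t"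
  have \<sigma>: "\<sigma> \<ge> 0" "of_real \<sigma> * of_real \<sigma> = \<mu>" using t by (simp_all add: \<sigma>_def flip: of_real_mult)
  define z where "z i = (\<Sum>k<m. A$$(i,k) * cnj (v $ k)) + of_real \<sigma> * v $ i" for i
  have z: "(\<Sum>k<m. A$$(i,k) * cnj (z k)) = of_real \<sigma> * z i" if i: "i < m" for i
  proof -
    have "cnj (z k) = (\<Sum>l<m. cnj (A$$(k,l)) * v $ l) + of_real \<sigma> * cnj (v $ k)" for k
      by (simp add: z_def)
    then have "(\<Sum>k<m. A$$(i,k) * cnj (z k))
        = \<mu> * v $ i + of_real \<sigma> * (\<Sum>k<m. A$$(i,k) * cnj (v $ k))"
      using ev[OF i] by (simp add: sum.distrib sum_distrib_left algebra_simps)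
    then show ?thesis using \<sigma>(2) by (simp add: z_def algebra_simps)
  qed
  have iv: "(\<Sum>k<m. A$$(i,k) * cnj (\<i> * v $ k)) = of_real \<sigma> * (\<i> * v $ i)"
    if "i < m" "\<forall>k<m. z k = 0" for i
  proof -
    have "(\<Sum>k<m. A$$(i,k) * cnj (v $ k)) = - (of_real \<sigma> * v $ i)"
      using that by (simp add: z_def eq_neg_iff_add_eq_0)
    then show ?thesis by (simp add: sum_distrib_left[symmetric] sum_negf mult.left_commute[of _ \<i>])
  qed
  show ?thesis
  proof (cases "\<exists>k<m. z k \<noteq> 0")
    case True
    then obtain k1 where "k1 < m" "z k1 \<noteq> 0" by blast
    then show ?thesis using takagi_vector_normalize[of k1 m z A \<sigma>] z \<sigma>(1) by blast
  next
    case False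
    then show ?thesis
      using takagi_vector_normalize[OF k0(1), of "\<lambda>k. \<i> * v $ k" A \<sigma>] iv k0 \<sigma>(1) by auto
  qed
qed

lemma index_mat_diag [simp]:
  "i < m \<Longrightarrow> j < m \<Longrightarrow> mat_diag m f $$ (i,j) = (if i = j then f i else 0)"
  "dim_row (mat_diag m f) = m" "dim_col (mat_diag m f) = m"
  by (auto simp: mat_diag_def)

definition upper_left :: "nat \<Rightarrow> 'a mat \<Rightarrow> 'a mat" where
  "upper_left m B = mat m m (\<lambda>(i,j). B $$ (i,j))"

definition extend_mat :: "nat \<Rightarrow> 'a :: {zero,one} mat \<Rightarrow> 'a mat" where
  "extend_mat m U = mat (Suc m) (Suc m) (\<lambda>(i,j).
     if i < m \<and> j < m then U $$ (i,j) else if i = j then 1 else 0)"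

lemma upper_left_carrier [simp]: "upper_left m B \<in> carrier_mat m m"
  by (simp add: upper_left_def)

lemma index_upper_left [simp]:
  "i < m \<Longrightarrow> j < m \<Longrightarrow> upper_left m B $$ (i,j) = B $$ (i,j)"
  "dim_row (upper_left m B) = m" "dim_col (upper_left m B) = m"
  by (simp_all add: upper_left_def)

lemma extend_mat_carrier [simp]: "extend_mat m U \<in> carrier_mat (Suc m) (Suc m)"
  by (simp add: extend_mat_def)

lemma index_extend_mat [simp]:
  "i < m \<Longrightarrow> k < m \<Longrightarrow> extend_mat m U $$ (i,k) = U $$ (i,k)"
  "i < Suc m \<Longrightarrow> extend_mat m U $$ (i,m) = (if i = m then 1 else 0)"
  "k < Suc m \<Longrightarrow> extend_mat m U $$ (m,k) = (if k = m then 1 else 0)"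
  "dim_row (extend_mat m U) = Suc m" "dim_col (extend_mat m U) = Suc m"
  by (auto simp: extend_mat_def)

lemma upper_left_symmetric:
  assumes "B \<in> carrier_mat n n" "transpose_mat B = B" "m \<le> n"
  shows "transpose_mat (upper_left m B) = upper_left m B"
  using assms by (intro eq_matI) (auto simp: symmetric_mat_index)

lemma sum_lessThan_Suc_square:
  "(\<Sum>k<Suc m. \<Sum>l<Suc m. f k l) =
     (\<Sum>k<m. \<Sum>l<m. f k l) + (\<Sum>k<m. f k m) + (\<Sum>l<m. f m l) + (f m m :: 'a :: comm_monoid_add)"
  by (simp add: sum.distrib ac_simps)

lemma index_extend_congruence:
  fixes U B :: "'a :: comm_semiring_1 mat"
  assumes U: "U \<in> carrier_mat m m" and B: "B \<in> carrier_mat (Suc m) (Suc m)"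
    and ij: "i < Suc m" "j < Suc m"
  shows "(extend_mat m U * B * transpose_mat (extend_mat m U)) $$ (i,j) =
    (if i < m \<and> j < m then (U * upper_left m B * transpose_mat U) $$ (i,j)
     else if i < m then (\<Sum>k<m. U$$(i,k) * B$$(k,m))
     else if j < m then (\<Sum>l<m. B$$(m,l) * U$$(j,l))
     else B$$(m,m))"
proof -
  let ?E = "extend_mat m U"
  have "(?E * B * transpose_mat ?E) $$ (i,j)
      = (\<Sum>k<Suc m. \<Sum>l<Suc m. ?E$$(i,k) * B$$(k,l) * ?E$$(j,l))"
    using B ij by (intro index_mult_mult_transpose) auto
  also have "\<dots> = (\<Sum>k<m. \<Sum>l<m. ?E$$(i,k) * B$$(k,l) * ?E$$(j,l))
      + (\<Sum>k<m. ?E$$(i,k) * B$$(k,m) * ?E$$(j,m))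
      + (\<Sum>l<m. ?E$$(i,m) * B$$(m,l) * ?E$$(j,l))
      + ?E$$(i,m) * B$$(m,m) * ?E$$(j,m)"
    by (rule sum_lessThan_Suc_square)
  finally have e: "(?E * B * transpose_mat ?E) $$ (i,j) = \<dots>" .
  have "(U * upper_left m B * transpose_mat U) $$ (i,j)
      = (\<Sum>k<m. \<Sum>l<m. U$$(i,k) * B$$(k,l) * U$$(j,l))" if "i < m" "j < m"
    using U that by (subst index_mult_mult_transpose[of _ m m _ m _ m]) auto
  then show ?thesis using e ij by (auto simp: less_Suc_eq)
qed

lemma unitary_mat_extend:
  assumes "unitary_mat m U" shows "unitary_mat (Suc m) (extend_mat m U)"
  unfolding unitary_mat_iff_orthonormal_rows
proof (intro conjI allI impI extend_mat_carrier)
  fix i j assume ij: "i < Suc m" "j < Suc m"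
  show "(\<Sum>k<Suc m. extend_mat m U$$(i,k) * cnj (extend_mat m U$$(j,k))) = (if i = j then 1 else 0)"
  proof (cases "i < m \<and> j < m")
    case True
    then show ?thesis using unitary_mat_orthonormal_rows[OF assms, of i j] by simp
  qed (use ij in \<open>auto simp: less_Suc_eq\<close>)
qed

text \<open>Rotating a Takagi vector \<open>x\<close> (\<open>A conj(x) = \<sigma> x\<close>) into the last basis vector splits off \<open>\<sigma>\<close>.\<close>
lemma takagi_deflation:
  fixes A :: "complex mat"
  assumes A: "A \<in> carrier_mat (Suc m) (Suc m)" "transpose_mat A = A"
  shows "\<exists>U \<sigma>. unitary_mat (Suc m) U \<and> \<sigma> \<ge> 0 \<and>
     (\<forall>i<Suc m. (U * A * transpose_mat U) $$ (i,m) = (if i = m then of_real \<sigma> else 0))"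
proof -
  obtain x \<sigma> where \<sigma>: "\<sigma> \<ge> 0" and x: "(\<Sum>k<Suc m. (cmod (x k))^2) = 1"
    and Ax: "\<forall>i<Suc m. (\<Sum>k<Suc m. A$$(i,k) * cnj (x k)) = of_real \<sigma> * x i"
    using takagi_vector_exists[OF A] by auto
  obtain P where P: "unitary_mat (Suc m) P" and Px: "\<forall>i<Suc m. P $$ (i, m) = x i"
    using unitary_completion[of "Suc m" x] x by auto
  have Pc: "P \<in> carrier_mat (Suc m) (Suc m)" using P by (rule unitary_mat_carrier)
  define U where "U = conj_transpose P"
  have "(U * A * transpose_mat U) $$ (i,m) = (if i = m then of_real \<sigma> else 0)"
    if i: "i < Suc m" for i
  proof -
    have "(U * A * transpose_mat U) $$ (i,m)
        = (\<Sum>k<Suc m. \<Sum>l<Suc m. U$$(i,k) * A$$(k,l) * U$$(m,l))"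
      unfolding U_def using Pc A i by (intro index_mult_mult_transpose) auto
    also have "\<dots> = (\<Sum>k<Suc m. U$$(i,k) * (\<Sum>l<Suc m. A$$(k,l) * cnj (x l)))"
      using Pc Px by (simp add: U_def sum_distrib_left ac_simps del: sum.lessThan_Suc)
    also have "\<dots> = of_real \<sigma> * (\<Sum>k<Suc m. cnj (P$$(k,i)) * P$$(k,m))"
      using Ax Pc Px i by (simp add: U_def sum_distrib_left ac_simps del: sum.lessThan_Suc)
    also have "\<dots> = (if i = m then of_real \<sigma> else 0)"
      using unitary_mat_orthonormal_cols[OF P i, of m] by simp
    finally show ?thesis .
  qed
  then show ?thesis using unitary_mat_conj_transpose[OF P] \<sigma> unfolding U_def by blast
qed

theorem takagi_factorization:
  fixes A :: "complex mat"
  assumes "A \<in> carrier_mat m m" "transpose_mat A = A"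
  shows "\<exists>U s. unitary_mat m U \<and> (\<forall>i. 0 \<le> s i) \<and>
     U * A * transpose_mat U = mat_diag m (\<lambda>i. of_real (s i))"
  using assms
proof (induction m arbitrary: A)
  case 0
  then show ?case
    by (intro exI[of _ "1\<^sub>m 0"] exI[of _ "\<lambda>_. 0"]) (auto simp: unitary_mat_one intro!: eq_matI)
next
  case (Suc m)
  obtain U0 \<sigma> where U0: "unitary_mat (Suc m) U0" and \<sigma>: "\<sigma> \<ge> 0"
    and col: "\<forall>i<Suc m. (U0 * A * transpose_mat U0) $$ (i,m) = (if i = m then of_real \<sigma> else 0)"
    using takagi_deflation[OF Suc.prems] by blast
  have U0c: "U0 \<in> carrier_mat (Suc m) (Suc m)" using U0 by (rule unitary_mat_carrier)
  define B where "B = U0 * A * transpose_mat U0"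
  have B: "B \<in> carrier_mat (Suc m) (Suc m)" "transpose_mat B = B"
    using Suc.prems U0c by (simp_all only: B_def transpose_congruence[OF U0c Suc.prems(1)]) auto
  have col: "B$$(l,m) = (if l = m then of_real \<sigma> else 0)" if "l < Suc m" for l
    using col that by (simp add: B_def)
  have row: "B$$(m,l) = (if l = m then of_real \<sigma> else 0)" if "l < Suc m" for l
    using col symmetric_mat_index[OF B] that by (metis lessI)
  obtain U' s' where U': "unitary_mat m U'" and s': "\<forall>i. 0 \<le> s' i"
    and D': "U' * upper_left m B * transpose_mat U' = mat_diag m (\<lambda>i. of_real (s' i))"
    using Suc.IH[OF upper_left_carrier upper_left_symmetric[OF B]] by fastforce
  have U'c: "U' \<in> carrier_mat m m" using U' by (rule unitary_mat_carrier)
  define U where "U = extend_mat m U' * U0"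
  have "U * A * transpose_mat U = extend_mat m U' * B * transpose_mat (extend_mat m U')"
    unfolding U_def B_def using U0c Suc.prems by (intro congruence_mult) auto
  also have "\<dots> = mat_diag (Suc m) (\<lambda>i. of_real ((s'(m := \<sigma>)) i))"
    using index_extend_congruence[OF U'c B(1)] D' col row
    by (intro eq_matI) (auto simp: less_Suc_eq)
  finally show ?case
    using unitary_mat_mult[OF unitary_mat_extend[OF U'] U0] s' \<sigma> unfolding U_def
    by (intro exI[of _ U] exI[of _ "s'(m := \<sigma>)"]) (auto simp: U_def)
qed

lemma permutation_mat_congruence:
  assumes p: "p permutes {..<m}"
  defines "P \<equiv> mat m m (\<lambda>(i,j). if j = p i then 1 else 0 :: complex)"
  shows "unitary_mat m P" "P * mat_diag m f * transpose_mat P = mat_diag m (f \<circ> p)"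
proof -
  have pin: "p i < m" if "i < m" for i using permutes_in_image[OF p] that by simp
  have pinj: "p i = p j \<longleftrightarrow> i = j" for i j using permutes_inj[OF p] by (auto dest: injD)
  show "unitary_mat m P" unfolding unitary_mat_iff_orthonormal_rows
  proof (intro conjI allI impI)
    fix i j assume ij: "i < m" "j < m"
    have "(\<Sum>k<m. P$$(i,k) * cnj (P$$(j,k))) = (\<Sum>k<m. if k = p i then (if k = p j then 1 else 0) else 0)"
      using ij by (intro sum.cong refl) (auto simp: P_def)
    then show "(\<Sum>k<m. P$$(i,k) * cnj (P$$(j,k))) = (if i = j then 1 else 0)"
      using pin[OF ij(1)] pinj by simp
  qed (simp add: P_def)
  show "P * mat_diag m f * transpose_mat P = mat_diag m (f \<circ> p)"
  proof (rule eq_matI)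
    fix i j assume "i < dim_row (mat_diag m (f \<circ> p))" "j < dim_col (mat_diag m (f \<circ> p))"
    then have ij: "i < m" "j < m" by auto
    have "(P * mat_diag m f * transpose_mat P) $$ (i,j)
        = (\<Sum>k<m. \<Sum>l<m. P$$(i,k) * mat_diag m f$$(k,l) * P$$(j,l))"
      using ij by (intro index_mult_mult_transpose) (auto simp: P_def)
    also have "\<dots> = (\<Sum>k<m. if k = p i then (\<Sum>l<m. if l = p j then mat_diag m f$$(k,l) else 0) else 0)"
      using ij by (intro sum.cong refl) (auto simp: P_def if_distrib cong: if_cong)
    also have "\<dots> = mat_diag m (f \<circ> p) $$ (i,j)" using pin ij pinj by simp
    finally show "(P * mat_diag m f * transpose_mat P) $$ (i,j) = mat_diag m (f \<circ> p) $$ (i,j)" .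
  qed (auto simp: P_def)
qed

lemma takagi_factorization_sorted:
  fixes A :: "complex mat"
  assumes "A \<in> carrier_mat m m" "transpose_mat A = A"
  shows "\<exists>U s. unitary_mat m U \<and> (\<forall>i. 0 \<le> s i) \<and> (\<forall>i j. i \<le> j \<longrightarrow> j < m \<longrightarrow> s j \<le> s i)
     \<and> U * A * transpose_mat U = mat_diag m (\<lambda>i. of_real (s i))"
proof -
  obtain U s where U: "unitary_mat m U" and s: "\<forall>i. 0 \<le> s i"
    and D: "U * A * transpose_mat U = mat_diag m (\<lambda>i. of_real (s i))"
    using takagi_factorization[OF assms] by blast
  define xs where "xs = map s [0..<m]"
  have "mset (rev (sort xs)) = mset xs" by simp
  then obtain p where p: "p permutes {..<m}" and pxs: "permute_list p xs = rev (sort xs)"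
    using mset_eq_permutation by (metis length_map diff_zero length_upt xs_def)
  have sp: "rev (sort xs) ! i = s (p i)" if "i < m" for i
    using permute_list_nth[of p xs i] p pxs permutes_in_image[OF p, of i] that by (simp add: xs_def)
  have "s (p j) \<le> s (p i)" if "i \<le> j" "j < m" for i j
  proof -
    have "sort xs ! (m - Suc j) \<le> sort xs ! (m - Suc i)"
      using that by (intro sorted_nth_mono) (auto simp: xs_def)
    then show ?thesis using sp[of i] sp[of j] that by (simp add: rev_nth xs_def)
  qed
  moreover obtain P where "unitary_mat m P"
    and PD: "P * mat_diag m (\<lambda>i. of_real (s i)) * transpose_mat P = mat_diag m (\<lambda>i. of_real (s (p i)))"
    using permutation_mat_congruence[OF p] by (fastforce simp: o_def)
  moreover have "P * U * A * transpose_mat (P * U) = mat_diag m (\<lambda>i. of_real (s (p i)))"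
    using PD D assms unitary_mat_carrier[OF U] unitary_mat_carrier[OF \<open>unitary_mat m P\<close>]
    by (simp only: congruence_mult[of P m U A])
  ultimately show ?thesis using unitary_mat_mult[OF _ U] s
    by (intro exI[of _ "P * U"] exI[of _ "s \<circ> p"]) auto
qed

definition normalized_diagonal :: "nat \<Rightarrow> (nat \<Rightarrow> real) \<Rightarrow> bool" where
  "normalized_diagonal m l \<longleftrightarrow> (\<forall>i<m. l i = 0) \<or>
     (l 0 = 1 \<and> (\<forall>i j. i \<le> j \<longrightarrow> j < m \<longrightarrow> l j \<le> l i) \<and> (\<forall>i<m. 0 \<le> l i))"

lemma normalized_diagonalD:
  "normalized_diagonal m l \<Longrightarrow> (\<forall>i j. i \<le> j \<longrightarrow> j < m \<longrightarrow> l j \<le> l i) \<and> (\<forall>i<m. 0 \<le> l i)"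
  unfolding normalized_diagonal_def by (metis le_less_trans order_refl)

lemma normalized_diagonal_rescale:
  assumes c: "c > 0" and s: "\<forall>i. 0 \<le> s i" and mono: "\<forall>i j. i \<le> j \<longrightarrow> j < m \<longrightarrow> s j \<le> s i"
  shows "\<exists>t>0. normalized_diagonal m (\<lambda>i. t * c * s i)"
proof (cases "m = 0 \<or> s 0 = 0")
  case True
  have "s i = 0" if "i < m" for i
    using True mono[rule_format, of 0 i] s[rule_format, of i] that by auto
  then have "normalized_diagonal m (\<lambda>i. 1 * c * s i)"
    unfolding normalized_diagonal_def by simp
  then show ?thesis by (intro exI[of _ 1]) simp
next
  case False
  then have s0: "s 0 > 0" and m: "0 < m" using s by (auto simp: order_le_less)
  define t where "t = 1 / (c * s 0)"
  have t: "t > 0" and tc: "t * c > 0" using c s0 by (simp_all add: t_def)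
  have "normalized_diagonal m (\<lambda>i. t * c * s i)"
    unfolding normalized_diagonal_def
  proof (intro disjI2 conjI allI impI)
    show "t * c * s 0 = 1" using c s0 by (simp add: t_def)
    show "t * c * s j \<le> t * c * s i" if "i \<le> j" "j < m" for i j
      using mono that tc by (simp add: mult_left_mono)
    show "0 \<le> t * c * s i" for i using s tc by simp
  qed
  then show ?thesis using t by (intro exI[of _ t]) simp
qed

text \<open>The phase of \<open>w\<close> is absorbed into \<open>U\<close> via a square root, the modulus into \<open>t\<close>.\<close>
lemma takagi_factorization_normalized:
  fixes A :: "complex mat"
  assumes A: "A \<in> carrier_mat m m" "transpose_mat A = A" and w: "w \<noteq> 0"
  shows "\<exists>U t l. unitary_mat m U \<and> t > 0 \<and> normalized_diagonal m l \<and>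
     (w * of_real t) \<cdot>\<^sub>m (U * A * transpose_mat U) = mat_diag m (\<lambda>i. of_real (l i))"
proof -
  obtain U s where U: "unitary_mat m U" and s: "\<forall>i. 0 \<le> s i"
    and mono: "\<forall>i j. i \<le> j \<longrightarrow> j < m \<longrightarrow> s j \<le> s i"
    and D: "U * A * transpose_mat U = mat_diag m (\<lambda>i. of_real (s i))"
    using takagi_factorization_sorted[OF A] by blast
  obtain \<psi> where \<psi>: "cmod \<psi> = 1" and \<psi>w: "cnj \<psi> * w = of_real (cmod w)"
    using unimodular_phase by blast
  define \<phi> where "\<phi> = csqrt (cnj \<psi>)"
  have "\<phi> * \<phi> = cnj \<psi>" by (metis \<phi>_def power2_csqrt power2_eq_square)
  then have D\<phi>: "(\<phi> \<cdot>\<^sub>m U) * A * transpose_mat (\<phi> \<cdot>\<^sub>m U) = cnj \<psi> \<cdot>\<^sub>m mat_diag m (\<lambda>i. of_real (s i))"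
    using congruence_smult[OF unitary_mat_carrier[OF U] A(1)] D by simp
  have U\<phi>: "unitary_mat m (\<phi> \<cdot>\<^sub>m U)" using unitary_mat_smult[OF U] \<psi> by (simp add: \<phi>_def)
  obtain t where t: "t > 0" and l: "normalized_diagonal m (\<lambda>i. t * cmod w * s i)"
    using normalized_diagonal_rescale[of "cmod w" s m] w s mono by auto
  have "w * of_real t * cnj \<psi> = of_real (t * cmod w)" using \<psi>w by (simp add: ac_simps)
  then have "(w * of_real t) \<cdot>\<^sub>m ((\<phi> \<cdot>\<^sub>m U) * A * transpose_mat (\<phi> \<cdot>\<^sub>m U))
      = mat_diag m (\<lambda>i. of_real (t * cmod w * s i))"
    unfolding D\<phi> by (intro eq_matI) (auto simp: mult.assoc[symmetric])
  then show ?thesis using U\<phi> t l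
    by (intro exI[of _ "\<phi> \<cdot>\<^sub>m U"] exI[of _ t] exI[of _ "\<lambda>i. t * cmod w * s i"]) simp
qed

section \<open>Unitary congruence up to a scalar\<close>

lemma congruence_smult_right:
  fixes U X :: "'a :: comm_semiring_1 mat"
  assumes "U \<in> carrier_mat m m" "X \<in> carrier_mat m m"
  shows "U * (z \<cdot>\<^sub>m X) * transpose_mat U = z \<cdot>\<^sub>m (U * X * transpose_mat U)"
  using assms by (simp add: mult_smult_distrib[of _ m m _ m] mult_smult_assoc_mat[of _ m m _ m])

lemma unitary_congruence_cancel:
  assumes U: "unitary_mat m U" and A: "A \<in> carrier_mat m m"
  shows "conj_transpose U * (U * A * transpose_mat U) * transpose_mat (conj_transpose U) = A"
proof -
  have Uc: "U \<in> carrier_mat m m" "conj_transpose U \<in> carrier_mat m m" "map_mat cnj U \<in> carrier_mat m m"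
    using unitary_mat_carrier[OF U] by auto
  have "conj_transpose U * (U * A * transpose_mat U) * transpose_mat (conj_transpose U)
      = (conj_transpose U * U) * A * (transpose_mat U * map_mat cnj U)"
    using Uc A by (simp add: transpose_conj_transpose assoc_mult_mat[of _ m m _ m _ m])
  then show ?thesis
    using A by (simp add: unitary_mat_conj_transpose_mult[OF U] transpose_mult_conj_unitary[OF U])
qed

lemma congruence_mult_conj_transpose:
  assumes W: "unitary_mat m W" and X: "X \<in> carrier_mat m m"
  shows "(W * X * transpose_mat W) * conj_transpose (W * X * transpose_mat W)
    = W * (X * conj_transpose X) * conj_transpose W"
proof -
  have Wc: "W \<in> carrier_mat m m" "conj_transpose W \<in> carrier_mat m m" "map_mat cnj W \<in> carrier_mat m m"
    "conj_transpose X \<in> carrier_mat m m"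
    using unitary_mat_carrier[OF W] X by auto
  have "conj_transpose (W * X * transpose_mat W) = map_mat cnj W * conj_transpose X * conj_transpose W"
    using Wc X by (simp add: conj_transpose_mult[of _ m m _ m] conj_transpose_transpose
        assoc_mult_mat[of _ m m _ m _ m])
  then have "(W * X * transpose_mat W) * conj_transpose (W * X * transpose_mat W)
      = W * X * (transpose_mat W * map_mat cnj W) * conj_transpose X * conj_transpose W"
    using Wc X by (simp add: assoc_mult_mat[of _ m m _ m _ m])
  then show ?thesis
    using Wc X by (simp add: transpose_mult_conj_unitary[OF W] assoc_mult_mat[of _ m m _ m _ m])
qed

lemma mat_diag_mult_conj_transpose:
  "mat_diag m (\<lambda>i. complex_of_real (l i)) * conj_transpose (mat_diag m (\<lambda>i. complex_of_real (l i)))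
    = mat_diag m (\<lambda>i. complex_of_real ((l i)^2))"
proof -
  have "conj_transpose (mat_diag m (\<lambda>i. complex_of_real (l i))) = mat_diag m (\<lambda>i. complex_of_real (l i))"
    by (intro eq_matI) auto
  then show ?thesis by (simp add: power2_eq_square)
qed

lemma smult_smult_mat: "a \<cdot>\<^sub>m (b \<cdot>\<^sub>m A) = (a * b :: 'a :: semigroup_mult) \<cdot>\<^sub>m A"
  by (intro eq_matI) (auto simp: mult.assoc)

lemma smult_mult_conj_transpose:
  assumes "X \<in> carrier_mat m m"
  shows "(w \<cdot>\<^sub>m X) * conj_transpose (w \<cdot>\<^sub>m X) = of_real ((cmod w)^2) \<cdot>\<^sub>m (X * conj_transpose X)"
proof -
  have cX: "conj_transpose X \<in> carrier_mat m m" using assms by (metis carrier_matD conj_transpose_carrier)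
  have "(w \<cdot>\<^sub>m X) * conj_transpose (w \<cdot>\<^sub>m X) = w \<cdot>\<^sub>m (cnj w \<cdot>\<^sub>m (X * conj_transpose X))"
    unfolding conj_transpose_smult mult_smult_assoc_mat[OF assms smult_carrier_mat[OF cX]]
      mult_smult_distrib[OF assms cX] ..
  also have "\<dots> = of_real ((cmod w)^2) \<cdot>\<^sub>m (X * conj_transpose X)"
    unfolding smult_smult_mat complex_norm_square ..
  finally show ?thesis .
qed

lemma mat_diag_smult: "c \<cdot>\<^sub>m mat_diag m f = mat_diag m (\<lambda>i. (c :: 'a :: mult_zero) * f i)"
  by (intro eq_matI) auto

definition scaled_unitary_congruent :: "nat \<Rightarrow> complex mat \<Rightarrow> complex mat \<Rightarrow> bool" where
  "scaled_unitary_congruent m A B \<longleftrightarrow>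
     (\<exists>U w. unitary_mat m U \<and> w \<noteq> 0 \<and> B = w \<cdot>\<^sub>m (U * A * transpose_mat U))"

lemma scaled_unitary_congruentI:
  "unitary_mat m U \<Longrightarrow> w \<noteq> 0 \<Longrightarrow> w \<cdot>\<^sub>m (U * A * transpose_mat U) = B \<Longrightarrow>
     scaled_unitary_congruent m A B"
  unfolding scaled_unitary_congruent_def by blast

lemma scaled_unitary_congruent_sym:
  assumes A: "A \<in> carrier_mat m m" and AB: "scaled_unitary_congruent m A B"
  shows "scaled_unitary_congruent m B A"
proof -
  obtain U w where U: "unitary_mat m U" and w: "w \<noteq> 0" and B: "B = w \<cdot>\<^sub>m (U * A * transpose_mat U)"
    using AB unfolding scaled_unitary_congruent_def by blast
  have Uc: "U \<in> carrier_mat m m" using U by (rule unitary_mat_carrier)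
  have "(1 / w) \<cdot>\<^sub>m (conj_transpose U * B * transpose_mat (conj_transpose U))
      = (1 / w * w) \<cdot>\<^sub>m (conj_transpose U * (U * A * transpose_mat U) * transpose_mat (conj_transpose U))"
    using Uc A unfolding B by (subst congruence_smult_right[of _ m]) (auto intro!: eq_matI)
  also have "\<dots> = A" using w unitary_congruence_cancel[OF U A] by (auto intro!: eq_matI)
  finally show ?thesis using unitary_mat_conj_transpose[OF U] w by (intro scaled_unitary_congruentI) auto
qed

lemma scaled_unitary_congruent_trans:
  assumes A: "A \<in> carrier_mat m m"
    and AB: "scaled_unitary_congruent m A B" and BC: "scaled_unitary_congruent m B C"
  shows "scaled_unitary_congruent m A C"
proof -
  obtain U w where U: "unitary_mat m U" and w: "w \<noteq> 0" and B: "B = w \<cdot>\<^sub>m (U * A * transpose_mat U)"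
    using AB unfolding scaled_unitary_congruent_def by blast
  obtain U' w' where U': "unitary_mat m U'" and w': "w' \<noteq> 0"
    and C: "C = w' \<cdot>\<^sub>m (U' * B * transpose_mat U')"
    using BC unfolding scaled_unitary_congruent_def by blast
  have Uc: "U \<in> carrier_mat m m" "U' \<in> carrier_mat m m"
    using U U' by (auto intro: unitary_mat_carrier)
  have "(w' * w) \<cdot>\<^sub>m ((U' * U) * A * transpose_mat (U' * U)) = C"
    unfolding C B congruence_mult[OF Uc(2,1) A] using Uc A
    by (subst congruence_smult_right[of _ m]) (auto intro!: eq_matI)
  then show ?thesis using unitary_mat_mult[OF U' U] w w' by (intro scaled_unitary_congruentI) auto
qed

lemma mset_diag_eq_of_similar:
  fixes f g :: "nat \<Rightarrow> real"
  assumes "similar_mat (mat_diag m (\<lambda>i. complex_of_real (f i))) (mat_diag m (\<lambda>i. complex_of_real (g i)))"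
  shows "mset (map f [0..<m]) = mset (map g [0..<m])"
proof -
  have char_poly: "char_poly (mat_diag m h) = (\<Prod>a\<leftarrow>map h [0..<m]. [:- a, 1:])" for h
  proof -
    have ut: "upper_triangular (mat_diag m h)" by (auto simp: upper_triangular_def)
    have "diag_mat (mat_diag m h) = map h [0..<m]"
      by (auto simp: diag_mat_def intro!: map_cong)
    then show ?thesis unfolding char_poly_upper_triangular[OF mat_diag_dim ut] by simp
  qed
  have proots: "proots (\<Prod>a\<leftarrow>xs. [:- a, 1:]) = mset xs" for xs :: "complex list"
  proof (induction xs)
    case (Cons a xs)
    have "(\<Prod>b\<leftarrow>xs. [:- b, 1:]) \<noteq> (0 :: complex poly)" by (auto simp: prod_list_zero_iff)
    then have "proots (\<Prod>b\<leftarrow>a # xs. [:- b, 1:]) = proots [:- a, 1:] + mset xs"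
      unfolding list.map prod_list.Cons Cons.IH[symmetric] by (intro proots_mult) auto
    then show ?case by simp
  qed simp
  have "mset (map (\<lambda>i. complex_of_real (f i)) [0..<m]) = mset (map (\<lambda>i. complex_of_real (g i)) [0..<m])"
    using char_poly_similar[OF assms] proots by (metis char_poly)
  then have "image_mset Re (mset (map (\<lambda>i. complex_of_real (f i)) [0..<m]))
      = image_mset Re (mset (map (\<lambda>i. complex_of_real (g i)) [0..<m]))"
    by (rule arg_cong)
  then show ?thesis by (simp add: mset_map[symmetric] o_def del: mset_map)
qed

lemma antitone_mset_eq:
  fixes f g :: "nat \<Rightarrow> real"
  assumes ms: "mset (map f [0..<m]) = mset (map g [0..<m])"
    and mf: "\<forall>i j. i \<le> j \<longrightarrow> j < m \<longrightarrow> f j \<le> f i" and mg: "\<forall>i j. i \<le> j \<longrightarrow> j < m \<longrightarrow> g j \<le> g i"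
  shows "\<forall>i<m. f i = g i"
proof -
  have sorted: "sorted (rev (map h [0..<m]))" if "\<forall>i j. i \<le> j \<longrightarrow> j < m \<longrightarrow> h j \<le> h i" for h :: "nat \<Rightarrow> real"
    unfolding sorted_iff_nth_mono using that by (auto simp: rev_nth)
  have "rev (map f [0..<m]) = sort (rev (map g [0..<m]))"
    by (rule properties_for_sort[symmetric]) (use ms sorted[OF mf] in auto)
  also have "\<dots> = rev (map g [0..<m])" using sorted[OF mg] by (rule sorted_sort_id)
  finally show ?thesis by (simp add: map_eq_conv)
qed

lemma similar_diag_squares_of_congruence:
  assumes W: "unitary_mat m W"
    and D: "mat_diag m (\<lambda>i. of_real (l2 i)) = w \<cdot>\<^sub>m (W * mat_diag m (\<lambda>i. of_real (l1 i)) * transpose_mat W)"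
  shows "similar_mat (mat_diag m (\<lambda>i. complex_of_real ((l2 i)^2)))
    (mat_diag m (\<lambda>i. complex_of_real ((cmod w * l1 i)^2)))"
proof -
  let ?D = "\<lambda>l. mat_diag m (\<lambda>i. complex_of_real (l i))"
  have Wc: "W \<in> carrier_mat m m" "conj_transpose W \<in> carrier_mat m m"
    using unitary_mat_carrier[OF W] by auto
  note DD = mat_diag_mult_conj_transpose[of m]
  define X where "X = W * ?D l1 * transpose_mat W"
  have Xc: "X \<in> carrier_mat m m" unfolding X_def using Wc by (intro mult_carrier_mat[of _ m m]) auto
  have "?D (\<lambda>i. (l2 i)^2) = ?D l2 * conj_transpose (?D l2)" by (rule DD[symmetric])
  also have "\<dots> = (w \<cdot>\<^sub>m X) * conj_transpose (w \<cdot>\<^sub>m X)" by (simp only: D X_def)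
  also have "\<dots> = of_real ((cmod w)^2) \<cdot>\<^sub>m (X * conj_transpose X)"
    by (rule smult_mult_conj_transpose[OF Xc])
  also have "\<dots> = of_real ((cmod w)^2) \<cdot>\<^sub>m (W * ?D (\<lambda>i. (l1 i)^2) * conj_transpose W)"
    unfolding X_def congruence_mult_conj_transpose[OF W mat_diag_dim] DD ..
  also have "\<dots> = W * (of_real ((cmod w)^2) \<cdot>\<^sub>m ?D (\<lambda>i. (l1 i)^2)) * conj_transpose W"
    using Wc by (simp add: mult_smult_distrib[of _ m m _ m] mult_smult_assoc_mat[of _ m m _ m])
  also have "\<dots> = W * ?D (\<lambda>i. (cmod w * l1 i)^2) * conj_transpose W"
    by (simp add: mat_diag_smult power_mult_distrib)
  finally show ?thesis
    using Wc unitary_mat_conj_transpose_mult[OF W] W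
    by (intro similar_matI[where n = m and P = W and Q = "conj_transpose W"])
      (simp_all add: unitary_mat_def mult_carrier_mat[of _ m m])
qed

lemma normalized_diagonal_sq_antitone:
  assumes "normalized_diagonal m l" "c \<ge> 0"
  shows "\<forall>i j. i \<le> j \<longrightarrow> j < m \<longrightarrow> (c * l j)^2 \<le> (c * l i)^2"
proof (intro allI impI)
  fix i j assume ij: "i \<le> j" "j < m"
  then have "l j \<le> l i" "0 \<le> l j" using normalized_diagonalD[OF assms(1)] by auto
  then show "(c * l j)^2 \<le> (c * l i)^2"
    using assms(2) by (intro power_mono mult_left_mono) auto
qed

lemma scaled_unitary_congruent_diag_eq:
  assumes "scaled_unitary_congruent m (mat_diag m (\<lambda>i. of_real (l1 i))) (mat_diag m (\<lambda>i. of_real (l2 i)))"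
    and n1: "normalized_diagonal m l1" and n2: "normalized_diagonal m l2"
  shows "\<forall>i<m. l1 i = l2 i"
proof -
  obtain W w where W: "unitary_mat m W" and w: "w \<noteq> 0"
    and D2: "mat_diag m (\<lambda>i. of_real (l2 i)) = w \<cdot>\<^sub>m (W * mat_diag m (\<lambda>i. of_real (l1 i)) * transpose_mat W)"
    using assms(1) unfolding scaled_unitary_congruent_def by blast
  have ms: "mset (map (\<lambda>i. (l2 i)^2) [0..<m]) = mset (map (\<lambda>i. (cmod w * l1 i)^2) [0..<m])"
    by (rule mset_diag_eq_of_similar[OF similar_diag_squares_of_congruence[OF W D2]])
  have "\<forall>i j. i \<le> j \<longrightarrow> j < m \<longrightarrow> (l2 j)^2 \<le> (l2 i)^2"
    using normalized_diagonal_sq_antitone[OF n2, of 1] by simp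
  from antitone_mset_eq[OF ms this normalized_diagonal_sq_antitone[OF n1 norm_ge_zero]]
  have sq: "\<forall>i<m. (l2 i)^2 = (cmod w * l1 i)^2" .
  have l2: "l2 i = cmod w * l1 i" if i: "i < m" for i
  proof -
    have "0 \<le> l2 i" "0 \<le> cmod w * l1 i"
      using normalized_diagonalD[OF n1] normalized_diagonalD[OF n2] i by auto
    then show ?thesis using power2_eq_iff_nonneg sq i by blast
  qed
  show ?thesis
  proof (cases "\<forall>i<m. l1 i = 0")
    case True
    then show ?thesis using l2 by simp
  next
    case False
    then obtain i0 where i0: "i0 < m" "l1 i0 \<noteq> 0" by auto
    then have "\<not> (\<forall>i<m. l2 i = 0)" using l2 w by auto
    then have "l1 0 = 1" "l2 0 = 1" using n1 n2 False unfolding normalized_diagonal_def by auto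
    then have "cmod w = 1" using l2[of 0] i0 by simp
    then show ?thesis using l2 by simp
  qed
qed

section \<open>The action in block form\<close>

definition last_col_image :: "nat \<Rightarrow> complex mat \<Rightarrow> complex mat \<Rightarrow> nat \<Rightarrow> complex" where
  "last_col_image m V H i = (\<Sum>k<m. V$$(i,k) * H$$(k,m))"

lemma last_col_image_smult:
  "V \<in> carrier_mat m m \<Longrightarrow> i < m \<Longrightarrow> last_col_image m (z \<cdot>\<^sub>m V) H i = z * last_col_image m V H i"
  by (simp add: last_col_image_def sum_distrib_left ac_simps)

lemma index_block_B [simp]:
  "i < m \<Longrightarrow> k < m \<Longrightarrow> block_B (Suc m) V c d $$ (i,k) = V $$ (i,k)"
  "i < m \<Longrightarrow> block_B (Suc m) V c d $$ (i,m) = c $ i"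
  "k < m \<Longrightarrow> block_B (Suc m) V c d $$ (m,k) = 0"
  "block_B (Suc m) V c d $$ (m,m) = d"
  "block_B n V c d \<in> carrier_mat n n"
  "dim_row (block_B n V c d) = n" "dim_col (block_B n V c d) = n"
  by (simp_all add: block_B_def)

lemma index_block_B_congruence:
  fixes H V :: "complex mat" and c :: "complex vec" and d :: complex
  assumes H: "H \<in> carrier_mat (Suc m) (Suc m)" "transpose_mat H = H" and V: "V \<in> carrier_mat m m"
    and ij: "i < Suc m" "j < Suc m"
  defines "B \<equiv> block_B (Suc m) V c d" and "\<beta> \<equiv> last_col_image m V H" and "h \<equiv> H$$(m,m)"
  shows "(B * H * transpose_mat B) $$ (i,j) =
    (if i < m \<and> j < m then (V * upper_left m H * transpose_mat V) $$ (i,j)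
        + c$i * \<beta> j + c$j * \<beta> i + c$i * c$j * h
     else if i < m then d * (\<beta> i + c$i * h)
     else if j < m then d * (\<beta> j + c$j * h)
     else d * d * h)"
proof -
  have "(B * H * transpose_mat B) $$ (i,j) = (\<Sum>k<Suc m. \<Sum>l<Suc m. B$$(i,k) * H$$(k,l) * B$$(j,l))"
    using H ij by (intro index_mult_mult_transpose) (auto simp: B_def)
  also have "\<dots> = (\<Sum>k<m. \<Sum>l<m. B$$(i,k) * H$$(k,l) * B$$(j,l))
      + (\<Sum>k<m. B$$(i,k) * H$$(k,m) * B$$(j,m))
      + (\<Sum>l<m. B$$(i,m) * H$$(m,l) * B$$(j,l))
      + B$$(i,m) * H$$(m,m) * B$$(j,m)"
    by (rule sum_lessThan_Suc_square)
  finally have e: "(B * H * transpose_mat B) $$ (i,j) = \<dots>" .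
  have row: "H$$(m,l) = H$$(l,m)" if "l < m" for l using symmetric_mat_index[OF H] that by simp
  have top: "(V * upper_left m H * transpose_mat V) $$ (i,j)
      = (\<Sum>k<m. \<Sum>l<m. B$$(i,k) * H$$(k,l) * B$$(j,l))" if "i < m" "j < m"
    using V that by (subst index_mult_mult_transpose[of _ m m _ m _ m]) (auto simp: B_def)
  consider "i < m" "j < m" | "i < m" "j = m" | "i = m" "j < m" | "i = m" "j = m"
    using ij by linarith
  then show ?thesis
  proof cases
    case 1
    then show ?thesis using e top row
      by (simp add: B_def \<beta>_def h_def last_col_image_def sum_distrib_left ac_simps)
  next
    case 2
    then show ?thesis using e
      by (simp add: B_def \<beta>_def h_def last_col_image_def sum_distrib_left algebra_simps)
  next
    case 3
    then show ?thesis using e row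
      by (simp add: B_def \<beta>_def h_def last_col_image_def sum_distrib_left algebra_simps)
  next
    case 4
    then show ?thesis using e by (simp add: B_def h_def)
  qed
qed

lemma index_act:
  fixes H V :: "complex mat" and c :: "complex vec" and d :: complex
  assumes H: "H \<in> carrier_mat (Suc m) (Suc m)" "transpose_mat H = H" and a: "a > 0"
    and V: "V \<in> carrier_mat m m" and ij: "i < Suc m" "j < Suc m"
  defines "U \<equiv> of_real (sqrt a) \<cdot>\<^sub>m V" and "\<gamma> \<equiv> \<lambda>k. of_real (sqrt a) * c $ k"
    and "h \<equiv> H$$(m,m)"
  shows "act (Suc m) a V c d H $$ (i,j) = cnj d *
    (if i < m \<and> j < m then (U * upper_left m H * transpose_mat U) $$ (i,j)
        + \<gamma> i * last_col_image m U H j + \<gamma> j * last_col_image m U H i + \<gamma> i * \<gamma> j * h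
     else if i < m then of_real (sqrt a) * d * (last_col_image m U H i + \<gamma> i * h)
     else if j < m then of_real (sqrt a) * d * (last_col_image m U H j + \<gamma> j * h)
     else of_real a * d * d * h)"
proof -
  define s :: complex where "s = of_real (sqrt a)"
  have a_s: "of_real a = s * s" using a by (simp add: s_def flip: of_real_mult)
  have \<beta>: "last_col_image m U H k = s * last_col_image m V H k" if "k < m" for k
    unfolding U_def s_def by (rule last_col_image_smult[OF V that])
  have top: "(U * upper_left m H * transpose_mat U) $$ (i,j)
      = s * s * (V * upper_left m H * transpose_mat V) $$ (i,j)" if "i < m" "j < m"
    using congruence_smult[OF V upper_left_carrier, of s] that V by (simp add: U_def s_def)
  have "act (Suc m) a V c d H $$ (i,j)
      = of_real a * cnj d * (block_B (Suc m) V c d * H * transpose_mat (block_B (Suc m) V c d)) $$ (i,j)"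
    using H ij by (simp add: act_def)
  also have "\<dots> = of_real a * cnj d *
    (if i < m \<and> j < m then (V * upper_left m H * transpose_mat V) $$ (i,j)
        + c$i * last_col_image m V H j + c$j * last_col_image m V H i + c$i * c$j * h
     else if i < m then d * (last_col_image m V H i + c$i * h)
     else if j < m then d * (last_col_image m V H j + c$j * h)
     else d * d * h)"
    unfolding index_block_B_congruence[OF H V ij] h_def ..
  finally have e: "act (Suc m) a V c d H $$ (i,j) = \<dots>" .
  consider "i < m" "j < m" | "i < m" "j = m" | "i = m" "j < m" | "i = m" "j = m"
    using ij by linarith
  then show ?thesis
  proof cases
    case 1
    then show ?thesis unfolding e a_s using top \<beta> by (simp add: \<gamma>_def s_def[symmetric] algebra_simps)
  next
    case 2
    then show ?thesis unfolding e a_s using \<beta> by (simp add: \<gamma>_def s_def[symmetric] algebra_simps)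
  next
    case 3
    then show ?thesis unfolding e a_s using \<beta> by (simp add: \<gamma>_def s_def[symmetric] algebra_simps)
  next
    case 4
    then show ?thesis unfolding e a_s by (simp add: algebra_simps)
  qed
qed

lemma index_normal_form:
  assumes "i < Suc m" "j < Suc m" "0 < m"
  shows "normal_form (Suc m) k lam $$ (i,j) =
    (if i < m \<and> j < m then (if i = j then complex_of_real (lam ! i) else 0)
     else if i < m then (if k = 1 \<and> i = m - 1 then 1 else 0)
     else if j < m then (if k = 1 \<and> j = m - 1 then 1 else 0)
     else (if k = 3 then 1 else 0))"
  using assms by (auto simp: normal_form_def)

text \<open>In the coordinates \<open>U = \<surd>a V\<close> (unitary) and \<open>\<gamma> = \<surd>a c\<close>, the equation
  \<open>act n a V c d H = normal_form n k lam\<close> splits into conditions on the upper left block,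
  the last column and the corner.\<close>
lemma act_eq_normal_formI:
  fixes H U :: "complex mat" and \<gamma> :: "nat \<Rightarrow> complex"
  assumes H: "H \<in> carrier_mat (Suc m) (Suc m)" "transpose_mat H = H" and m: "0 < m"
    and a: "a > 0" and U: "unitary_mat m U" and d: "d \<noteq> 0"
    and top: "\<And>i j. i < m \<Longrightarrow> j < m \<Longrightarrow> cnj d * ((U * upper_left m H * transpose_mat U) $$ (i,j)
        + \<gamma> i * last_col_image m U H j + \<gamma> j * last_col_image m U H i + \<gamma> i * \<gamma> j * H$$(m,m))
      = (if i = j then of_real (lam ! i) else 0)"
    and col: "\<And>i. i < m \<Longrightarrow> cnj d * (of_real (sqrt a) * d * (last_col_image m U H i + \<gamma> i * H$$(m,m)))
      = (if k = 1 \<and> i = m - 1 then 1 else 0)"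
    and corner: "cnj d * (of_real a * d * d * H$$(m,m)) = (if k = 3 then 1 else 0)"
  shows "\<exists>V c. admissible_params (Suc m) a V c d \<and> act (Suc m) a V c d H = normal_form (Suc m) k lam"
proof -
  have Uc: "U \<in> carrier_mat m m" using U by (rule unitary_mat_carrier)
  define V where "V = of_real (1 / sqrt a) \<cdot>\<^sub>m U"
  define c where "c = vec m (\<lambda>i. \<gamma> i / of_real (sqrt a))"
  have V: "V \<in> carrier_mat m m" and UV: "of_real (sqrt a) \<cdot>\<^sub>m V = U"
    using Uc a by (auto simp: V_def intro!: eq_matI simp flip: of_real_mult)
  have \<gamma>: "of_real (sqrt a) * c $ i = \<gamma> i" if "i < m" for i
    using that a by (simp add: c_def)
  have "admissible_params (Suc m) a V c d"
    using a d V U UV by (simp add: admissible_params_def c_def)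
  moreover have "act (Suc m) a V c d H = normal_form (Suc m) k lam"
  proof (rule eq_matI)
    fix i j assume "i < dim_row (normal_form (Suc m) k lam)" "j < dim_col (normal_form (Suc m) k lam)"
    then have ij: "i < Suc m" "j < Suc m" by (auto simp: normal_form_def)
    show "act (Suc m) a V c d H $$ (i,j) = normal_form (Suc m) k lam $$ (i,j)"
      unfolding index_act[OF H a V ij] index_normal_form[OF ij m] UV
      using top col corner \<gamma> ij by (auto simp: less_Suc_eq)
  qed (auto simp: act_def normal_form_def)
  ultimately show ?thesis by blast
qed

lemma act_eq_normal_formD:
  fixes H V :: "complex mat" and c :: "complex vec"
  assumes H: "H \<in> carrier_mat (Suc m) (Suc m)" "transpose_mat H = H" and m: "0 < m"
    and adm: "admissible_params (Suc m) a V c d"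
    and eq: "act (Suc m) a V c d H = normal_form (Suc m) k lam"
  defines "U \<equiv> of_real (sqrt a) \<cdot>\<^sub>m V" and "\<gamma> \<equiv> \<lambda>k. of_real (sqrt a) * c $ k"
  shows "a > 0" "unitary_mat m U" "d \<noteq> 0"
    "\<And>i j. i < m \<Longrightarrow> j < m \<Longrightarrow> cnj d * ((U * upper_left m H * transpose_mat U) $$ (i,j)
        + \<gamma> i * last_col_image m U H j + \<gamma> j * last_col_image m U H i + \<gamma> i * \<gamma> j * H$$(m,m))
      = (if i = j then of_real (lam ! i) else 0)"
    "\<And>i. i < m \<Longrightarrow> cnj d * (of_real (sqrt a) * d * (last_col_image m U H i + \<gamma> i * H$$(m,m)))
      = (if k = 1 \<and> i = m - 1 then 1 else 0)"
    "cnj d * (of_real a * d * d * H$$(m,m)) = (if k = 3 then 1 else 0)"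
proof -
  show a: "a > 0" and "unitary_mat m U" "d \<noteq> 0"
    using adm by (auto simp: admissible_params_def U_def)
  have V: "V \<in> carrier_mat m m" using adm by (simp add: admissible_params_def)
  have entry: "act (Suc m) a V c d H $$ (i,j) = normal_form (Suc m) k lam $$ (i,j)" for i j
    using eq by simp
  have index: "(if i < m \<and> j < m then cnj d * ((U * upper_left m H * transpose_mat U) $$ (i,j)
        + \<gamma> i * last_col_image m U H j + \<gamma> j * last_col_image m U H i + \<gamma> i * \<gamma> j * H$$(m,m))
     else if i < m then cnj d * (of_real (sqrt a) * d * (last_col_image m U H i + \<gamma> i * H$$(m,m)))
     else if j < m then cnj d * (of_real (sqrt a) * d * (last_col_image m U H j + \<gamma> j * H$$(m,m)))
     else cnj d * (of_real a * d * d * H$$(m,m))) =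
    (if i < m \<and> j < m then (if i = j then complex_of_real (lam ! i) else 0)
     else if i < m then (if k = 1 \<and> i = m - 1 then 1 else 0)
     else if j < m then (if k = 1 \<and> j = m - 1 then 1 else 0)
     else (if k = 3 then 1 else 0))" if "i < Suc m" "j < Suc m" for i j
    using entry[of i j] unfolding index_act[OF H a V that] index_normal_form[OF that m] U_def \<gamma>_def
    by (simp only: if_distrib[of "\<lambda>x. cnj d * x"])
  show "cnj d * ((U * upper_left m H * transpose_mat U) $$ (i,j)
        + \<gamma> i * last_col_image m U H j + \<gamma> j * last_col_image m U H i + \<gamma> i * \<gamma> j * H$$(m,m))
      = (if i = j then of_real (lam ! i) else 0)" if "i < m" "j < m" for i j
    using index[of i j] that by simp
  show "cnj d * (of_real (sqrt a) * d * (last_col_image m U H i + \<gamma> i * H$$(m,m)))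
      = (if k = 1 \<and> i = m - 1 then 1 else 0)" if "i < m" for i
    using index[of i m] that by simp
  show "cnj d * (of_real a * d * d * H$$(m,m)) = (if k = 3 then 1 else 0)"
    using index[of m m] by simp
qed

definition schur_complement :: "nat \<Rightarrow> complex mat \<Rightarrow> complex mat" where
  "schur_complement m H = mat m m (\<lambda>(i,j). H$$(i,j) - H$$(i,m) * H$$(j,m) / H$$(m,m))"

lemma schur_complement_carrier [simp]: "schur_complement m H \<in> carrier_mat m m"
  by (simp add: schur_complement_def)

lemma schur_complement_symmetric:
  assumes "H \<in> carrier_mat (Suc m) (Suc m)" "transpose_mat H = H"
  shows "transpose_mat (schur_complement m H) = schur_complement m H"
  using assms by (intro eq_matI) (auto simp: schur_complement_def symmetric_mat_index ac_simps)

lemma index_congruence_schur_complement: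
  fixes U H :: "complex mat"
  assumes U: "U \<in> carrier_mat m m" and ij: "i < m" "j < m"
  shows "(U * schur_complement m H * transpose_mat U) $$ (i,j) = (U * upper_left m H * transpose_mat U) $$ (i,j)
    - last_col_image m U H i * last_col_image m U H j / H$$(m,m)"
proof -
  have "(U * schur_complement m H * transpose_mat U) $$ (i,j)
      = (\<Sum>k<m. \<Sum>l<m. U$$(i,k) * H$$(k,l) * U$$(j,l)
          - (U$$(i,k) * H$$(k,m)) * (U$$(j,l) * H$$(l,m)) / H$$(m,m))"
    using U ij by (subst index_mult_mult_transpose[of _ m m _ m _ m])
      (auto simp: schur_complement_def algebra_simps intro!: sum.cong)
  also have "\<dots> = (U * upper_left m H * transpose_mat U) $$ (i,j)
      - last_col_image m U H i * last_col_image m U H j / H$$(m,m)"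
    using U ij index_mult_mult_transpose[OF U upper_left_carrier U ij, of H]
    by (simp add: sum_subtractf last_col_image_def sum_product sum_divide_distrib)
  finally show ?thesis .
qed

lemma last_col_image_mult:
  assumes "E \<in> carrier_mat m m" "U \<in> carrier_mat m m" "i < m"
  shows "last_col_image m (E * U) H i = (\<Sum>j<m. E$$(i,j) * last_col_image m U H j)"
proof -
  have "last_col_image m (E * U) H i = (\<Sum>k<m. (\<Sum>j<m. E$$(i,j) * U$$(j,k)) * H$$(k,m))"
    unfolding last_col_image_def using assms
    by (intro sum.cong refl) (subst index_mult_sum[of _ m m _ m], auto)
  also have "\<dots> = (\<Sum>k<m. \<Sum>j<m. E$$(i,j) * (U$$(j,k) * H$$(k,m)))"
    by (simp add: sum_distrib_left sum_distrib_right ac_simps)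
  also have "\<dots> = (\<Sum>j<m. E$$(i,j) * last_col_image m U H j)"
    by (subst sum.swap) (simp add: last_col_image_def sum_distrib_left)
  finally show ?thesis .
qed

lemma last_col_image_inverse:
  assumes U: "unitary_mat m U" and j: "j < m"
  shows "(\<Sum>i<m. cnj (U$$(i,j)) * last_col_image m U H i) = H$$(j,m)"
proof -
  have "(\<Sum>i<m. cnj (U$$(i,j)) * last_col_image m U H i)
      = (\<Sum>i<m. \<Sum>k<m. cnj (U$$(i,j)) * U$$(i,k) * H$$(k,m))"
    by (simp add: last_col_image_def sum_distrib_left ac_simps)
  also have "\<dots> = (\<Sum>k<m. (\<Sum>i<m. cnj (U$$(i,j)) * U$$(i,k)) * H$$(k,m))"
    by (subst sum.swap) (simp add: sum_distrib_right)
  also have "\<dots> = H$$(j,m)"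
    using unitary_mat_orthonormal_cols[OF U j] j by (simp add: sum_delta_mult)
  finally show ?thesis .
qed

lemma last_col_image_eq_0_iff:
  assumes "unitary_mat m U"
  shows "(\<forall>i<m. last_col_image m U H i = 0) \<longleftrightarrow> (\<forall>k<m. H$$(k,m) = 0)"
proof
  assume "\<forall>i<m. last_col_image m U H i = 0"
  then show "\<forall>k<m. H$$(k,m) = 0" using last_col_image_inverse[OF assms, of _ H] by simp
qed (simp add: last_col_image_def)

lemma upper_left_congruence:
  fixes W X :: "'a :: comm_semiring_1 mat"
  assumes W: "W \<in> carrier_mat (Suc m) (Suc m)" and X: "X \<in> carrier_mat (Suc m) (Suc m)"
    and W0: "\<forall>i<m. W$$(i,m) = 0"
  shows "upper_left m (W * X * transpose_mat W)
    = upper_left m W * upper_left m X * transpose_mat (upper_left m W)"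
proof (rule eq_matI)
  fix i j assume "i < dim_row (upper_left m W * upper_left m X * transpose_mat (upper_left m W))"
    "j < dim_col (upper_left m W * upper_left m X * transpose_mat (upper_left m W))"
  then have ij: "i < m" "j < m" by auto
  have "(W * X * transpose_mat W) $$ (i,j) = (\<Sum>k<Suc m. \<Sum>l<Suc m. W$$(i,k) * X$$(k,l) * W$$(j,l))"
    using W X ij by (intro index_mult_mult_transpose[of _ "Suc m" "Suc m" _ "Suc m" _ "Suc m"]) auto
  also have "\<dots> = (\<Sum>k<m. \<Sum>l<m. W$$(i,k) * X$$(k,l) * W$$(j,l))"
    using W0 ij by (simp add: sum_lessThan_Suc_square)
  also have "\<dots> = (upper_left m W * upper_left m X * transpose_mat (upper_left m W)) $$ (i,j)"
    using ij index_mult_mult_transpose[of "upper_left m W" m m "upper_left m X" m "upper_left m W" m i j]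
    by simp
  finally show "upper_left m (W * X * transpose_mat W) $$ (i,j)
      = (upper_left m W * upper_left m X * transpose_mat (upper_left m W)) $$ (i,j)"
    using ij by simp
qed auto

lemma unitary_mat_upper_left:
  assumes W: "unitary_mat (Suc m) W" and W0: "\<forall>i<m. W$$(i,m) = 0"
  shows "unitary_mat m (upper_left m W)"
  unfolding unitary_mat_iff_orthonormal_rows
proof (intro conjI allI impI upper_left_carrier)
  fix i j assume ij: "i < m" "j < m"
  have "(\<Sum>k<m. upper_left m W$$(i,k) * cnj (upper_left m W$$(j,k)))
      = (\<Sum>k<Suc m. W$$(i,k) * cnj (W$$(j,k)))"
    using ij W0 by simp
  then show "(\<Sum>k<m. upper_left m W$$(i,k) * cnj (upper_left m W$$(j,k))) = (if i = j then 1 else 0)"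
    using unitary_mat_orthonormal_rows[OF W, of i j] ij W0 by simp
qed

lemma upper_left_extend_mat:
  "U \<in> carrier_mat m m \<Longrightarrow> upper_left m (extend_mat m U) = U"
  by (intro eq_matI) auto

section \<open>Existence of the normal form\<close>

lemma admissible_lambda_of_normalized:
  "normalized_diagonal m l \<Longrightarrow> k \<noteq> 1 \<Longrightarrow> admissible_lambda (Suc m) k (map l [0..<m])"
  unfolding normalized_diagonal_def admissible_lambda_def
  by (cases m) (auto simp del: upt_Suc simp: nth_map_upt)

lemma admissible_lambda_type1:
  assumes l: "normalized_diagonal m l"
  shows "admissible_lambda (Suc (Suc m)) 1 (map l [0..<m] @ [0])"
proof -
  have nth: "(map l [0..<m] @ [0]) ! i = (if i < m then l i else 0)" if "i < Suc m" for i
    using that by (auto simp: nth_append less_Suc_eq)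
  show ?thesis
  proof (cases "\<forall>i<m. l i = 0")
    case True
    then show ?thesis by (auto simp: admissible_lambda_def nth)
  next
    case False
    then have "l 0 = 1" "0 < m" and mono: "\<forall>i j. i \<le> j \<longrightarrow> j < m \<longrightarrow> l j \<le> l i"
      and nonneg: "\<forall>i<m. 0 \<le> l i"
      using l by (auto simp: normalized_diagonal_def)
    show ?thesis unfolding admissible_lambda_def
    proof (intro conjI disjI2 allI impI)
      show "(map l [0..<m] @ [0]) ! 0 = 1" using nth[of 0] \<open>0 < m\<close> \<open>l 0 = 1\<close> by simp
      show "(map l [0..<m] @ [0]) ! j \<le> (map l [0..<m] @ [0]) ! i"
        if "i \<le> j" "j < Suc (Suc m) - 1" for i j
        using that nth[of i] nth[of j] mono nonneg by auto
      show "0 \<le> (map l [0..<m] @ [0]) ! i" if "i < Suc (Suc m) - 1" for i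
        using that nth[of i] nonneg by auto
    qed (use nth[of m] in simp_all)
  qed
qed

lemma normalized_diagonal_of_admissible:
  "admissible_lambda (Suc m) k lam \<Longrightarrow> normalized_diagonal m (\<lambda>i. lam ! i)"
  unfolding admissible_lambda_def normalized_diagonal_def by auto

lemma normalized_diagonal_of_admissible_type1:
  "admissible_lambda (Suc (Suc m)) 1 lam \<Longrightarrow> normalized_diagonal m (\<lambda>i. lam ! i) \<and> lam ! m = 0"
  unfolding admissible_lambda_def normalized_diagonal_def by auto

lemma normal_form_exists_type3:
  fixes H :: "complex mat"
  assumes H: "H \<in> carrier_mat (Suc m) (Suc m)" "transpose_mat H = H" and m: "0 < m"
    and h: "H$$(m,m) \<noteq> 0"
  shows "\<exists>lam. admissible_lambda (Suc m) 3 lam \<and>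
    (\<exists>a V c d. admissible_params (Suc m) a V c d \<and> act (Suc m) a V c d H = normal_form (Suc m) 3 lam)"
proof -
  define h where "h = H$$(m,m)"
  have "of_real (cmod h) / cnj h \<noteq> 0" using h by (simp add: h_def)
  from takagi_factorization_normalized[OF schur_complement_carrier schur_complement_symmetric[OF H] this]
  obtain U t l where U: "unitary_mat m U" and t: "t > 0" and l: "normalized_diagonal m l"
    and D: "(of_real (cmod h) / cnj h * of_real t) \<cdot>\<^sub>m (U * schur_complement m H * transpose_mat U)
      = mat_diag m (\<lambda>i. of_real (l i))"
    by blast
  have Uc: "U \<in> carrier_mat m m" using U by (rule unitary_mat_carrier)
  \<comment> \<open>\<open>\<gamma>\<close> clears the last column, \<open>cnj d\<close> is the scalar of the Takagi form and \<open>a\<close> makes the corner 1\<close>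
  define d where "d = of_real t * of_real (cmod h) / h"
  define a where "a = 1 / (t ^ 3 * cmod h)"
  define \<gamma> where "\<gamma> i = - last_col_image m U H i / h" for i
  have hn: "h \<noteq> 0" and a: "a > 0" and d: "d \<noteq> 0" using h t by (simp_all add: h_def a_def d_def)
  have cnj_d: "cnj d = of_real (cmod h) / cnj h * of_real t" by (simp add: d_def)
  have "cnj h * h = of_real (cmod h) * of_real (cmod h)"
    by (simp add: mult.commute[of "cnj h"] complex_norm_square[symmetric] power2_eq_square)
  then have "cnj d * d = of_real (t^2)"
    using hn by (simp add: d_def power2_eq_square)
  then have corner: "cnj d * (of_real a * d * d * h) = 1"
    using hn t by (simp add: d_def a_def field_simps power3_eq_cube power2_eq_square)
  have "\<exists>V c. admissible_params (Suc m) a V c d \<and> act (Suc m) a V c d H = normal_form (Suc m) 3 (map l [0..<m])"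
  proof (rule act_eq_normal_formI[OF H m a U d])
    fix i j assume ij: "i < m" "j < m"
    have "(U * upper_left m H * transpose_mat U) $$ (i,j) + \<gamma> i * last_col_image m U H j
        + \<gamma> j * last_col_image m U H i + \<gamma> i * \<gamma> j * H$$(m,m)
        = (U * schur_complement m H * transpose_mat U) $$ (i,j)"
      using hn ij by (simp add: index_congruence_schur_complement[OF Uc] \<gamma>_def h_def field_simps
          power2_eq_square)
    then show "cnj d * ((U * upper_left m H * transpose_mat U) $$ (i,j) + \<gamma> i * last_col_image m U H j
        + \<gamma> j * last_col_image m U H i + \<gamma> i * \<gamma> j * H$$(m,m))
      = (if i = j then of_real (map l [0..<m] ! i) else 0)"
      using arg_cong[OF D, of "\<lambda>M. M $$ (i,j)"] ij Uc by (simp add: cnj_d)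
  next
    show "cnj d * (of_real (sqrt a) * d * (last_col_image m U H i + \<gamma> i * H$$(m,m)))
      = (if (3::nat) = 1 \<and> i = m - 1 then 1 else 0)" if "i < m" for i
      using hn by (simp add: \<gamma>_def h_def)
  qed (use corner in \<open>simp add: h_def\<close>)
  moreover have "admissible_lambda (Suc m) 3 (map l [0..<m])"
    by (rule admissible_lambda_of_normalized[OF l]) simp
  ultimately show ?thesis by blast
qed

lemma normal_form_exists_type2:
  fixes H :: "complex mat"
  assumes H: "H \<in> carrier_mat (Suc m) (Suc m)" "transpose_mat H = H" and m: "0 < m"
    and h: "H$$(m,m) = 0" and b: "\<forall>k<m. H$$(k,m) = 0"
  shows "\<exists>lam. admissible_lambda (Suc m) 2 lam \<and>
    (\<exists>a V c d. admissible_params (Suc m) a V c d \<and> act (Suc m) a V c d H = normal_form (Suc m) 2 lam)"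
proof -
  obtain U t l where U: "unitary_mat m U" and t: "t > 0" and l: "normalized_diagonal m l"
    and D: "(1 * of_real t) \<cdot>\<^sub>m (U * upper_left m H * transpose_mat U) = mat_diag m (\<lambda>i. of_real (l i))"
    using takagi_factorization_normalized[OF upper_left_carrier upper_left_symmetric[OF H lessI[THEN less_imp_le]], where w=1]
    by auto
  have Uc: "U \<in> carrier_mat m m" using U by (rule unitary_mat_carrier)
  have \<beta>: "last_col_image m U H i = 0" for i using b by (simp add: last_col_image_def)
  have "\<exists>V c. admissible_params (Suc m) 1 V c (of_real t) \<and>
      act (Suc m) 1 V c (of_real t) H = normal_form (Suc m) 2 (map l [0..<m])"
  proof (rule act_eq_normal_formI[OF H m _ U, where \<gamma> = "\<lambda>_. 0"])
    fix i j assume ij: "i < m" "j < m"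
    show "cnj (of_real t) * ((U * upper_left m H * transpose_mat U) $$ (i,j) + 0 * last_col_image m U H j
        + 0 * last_col_image m U H i + 0 * 0 * H$$(m,m))
      = (if i = j then of_real (map l [0..<m] ! i) else 0)"
      using arg_cong[OF D, of "\<lambda>M. M $$ (i,j)"] ij Uc by simp
  qed (use t \<beta> h in simp_all)
  moreover have "admissible_lambda (Suc m) 2 (map l [0..<m])"
    by (rule admissible_lambda_of_normalized[OF l]) simp
  ultimately show ?thesis by blast
qed

text \<open>Rotate the last column of \<open>H\<close> onto the last basis vector, then diagonalize the
  \<open>(m-1) \<times> (m-1)\<close> block that this rotation leaves free.\<close>
lemma aligned_partial_takagi:
  fixes H :: "complex mat"
  assumes H: "H \<in> carrier_mat (Suc m) (Suc m)" "transpose_mat H = H" and m': "m = Suc m'"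
    and b: "k0 < m" "H$$(k0,m) \<noteq> 0"
  shows "\<exists>U r t l. unitary_mat m U \<and> r > 0 \<and> t > 0 \<and> normalized_diagonal m' l \<and>
    (\<forall>i<m. last_col_image m U H i = (if i = m' then of_real r else 0)) \<and>
    (\<forall>i<m'. \<forall>j<m'. of_real t * (U * upper_left m H * transpose_mat U) $$ (i,j)
      = (if i = j then of_real (l i) else 0))"
proof -
  have m: "0 < m" using m' by simp
  obtain U0 r where U0: "unitary_mat m U0" and r: "r > 0"
    and U0b: "\<forall>i<m. last_col_image m U0 H i = (if i = m' then of_real r else 0)"
    using unitary_aligning_vector[OF m, of k0 "\<lambda>k. H$$(k,m)"] b m'
    by (auto simp: last_col_image_def)
  have U0c: "U0 \<in> carrier_mat m m" using U0 by (rule unitary_mat_carrier)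
  have A: "upper_left m H \<in> carrier_mat m m" "transpose_mat (upper_left m H) = upper_left m H"
    using upper_left_symmetric[OF H] by auto
  define M0 where "M0 = U0 * upper_left m H * transpose_mat U0"
  have M0: "M0 \<in> carrier_mat m m" "transpose_mat M0 = M0"
    unfolding M0_def transpose_congruence[OF U0c A(1)] A(2) using U0c A by auto
  have m'_le: "m' \<le> m" using m' by simp
  obtain U1 t l where U1: "unitary_mat m' U1" and t: "t > 0" and l: "normalized_diagonal m' l"
    and D: "(1 * of_real t) \<cdot>\<^sub>m (U1 * upper_left m' M0 * transpose_mat U1) = mat_diag m' (\<lambda>i. of_real (l i))"
    using takagi_factorization_normalized[OF upper_left_carrier upper_left_symmetric[OF M0 m'_le],
        where w = 1]
    by auto
  have U1c: "U1 \<in> carrier_mat m' m'" using U1 by (rule unitary_mat_carrier)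
  define E where "E = extend_mat m' U1"
  have Ec: "E \<in> carrier_mat m m" by (simp add: E_def m')
  define U where "U = E * U0"
  have U: "unitary_mat m U"
    unfolding U_def E_def m' by (rule unitary_mat_mult[OF unitary_mat_extend[OF U1] U0[unfolded m']])
  define M where "M = U * upper_left m H * transpose_mat U"
  have "upper_left m' M = U1 * upper_left m' M0 * transpose_mat U1"
    unfolding M_def U_def congruence_mult[OF Ec U0c A(1)] M0_def[symmetric]
    using upper_left_congruence[of E m' M0] Ec M0(1) m' upper_left_extend_mat[OF U1c]
    by (simp add: E_def)
  then have DM: "(1 * of_real t) \<cdot>\<^sub>m upper_left m' M = mat_diag m' (\<lambda>i. of_real (l i))"
    using D by simp
  have top: "of_real t * M$$(i,j) = (if i = j then of_real (l i) else 0)" if "i < m'" "j < m'" for i j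
    using arg_cong[OF DM, of "\<lambda>X. X $$ (i,j)"] that by simp
  have \<beta>: "last_col_image m U H i = (if i = m' then of_real r else 0)" if i: "i < m" for i
  proof -
    have "last_col_image m U H i = (\<Sum>j<m. E$$(i,j) * last_col_image m U0 H j)"
      unfolding U_def by (rule last_col_image_mult[OF Ec U0c i])
    also have "\<dots> = (\<Sum>j<m. E$$(i,j) * (if j = m' then of_real r else 0))"
      using U0b by simp
    also have "\<dots> = E$$(i,m') * of_real r"
      using m' by (simp add: if_distrib[of "\<lambda>x. _ * x"] cong: if_cong)
    finally show ?thesis using i m' by (simp add: E_def)
  qed
  show ?thesis using U r t l \<beta> top unfolding M_def by blast
qed

lemma normal_form_exists_type1:
  fixes H :: "complex mat"
  assumes H: "H \<in> carrier_mat (Suc m) (Suc m)" "transpose_mat H = H" and m: "0 < m"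
    and h: "H$$(m,m) = 0" and b: "k0 < m" "H$$(k0,m) \<noteq> 0"
  shows "\<exists>lam. admissible_lambda (Suc m) 1 lam \<and>
    (\<exists>a V c d. admissible_params (Suc m) a V c d \<and> act (Suc m) a V c d H = normal_form (Suc m) 1 lam)"
proof -
  obtain m' where m': "m = Suc m'" using m by (cases m) auto
  obtain U r t l where U: "unitary_mat m U" and r: "r > 0" and t: "t > 0"
    and l: "normalized_diagonal m' l"
    and \<beta>: "\<forall>i<m. last_col_image m U H i = (if i = m' then of_real r else 0)"
    and top': "\<forall>i<m'. \<forall>j<m'. of_real t * (U * upper_left m H * transpose_mat U) $$ (i,j)
      = (if i = j then of_real (l i) else 0)"
    using aligned_partial_takagi[OF H m' b] by blast
  have Uc: "U \<in> carrier_mat m m" using U by (rule unitary_mat_carrier)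
  have A: "upper_left m H \<in> carrier_mat m m" "transpose_mat (upper_left m H) = upper_left m H"
    using upper_left_symmetric[OF H] by auto
  define M where "M = U * upper_left m H * transpose_mat U"
  have "M \<in> carrier_mat m m" "transpose_mat M = M"
    unfolding M_def transpose_congruence[OF Uc A(1)] A(2) using Uc A by auto
  note M_sym = symmetric_mat_index[OF this]
  have top: "of_real t * M$$(i,j) = (if i = j then of_real (l i) else 0)" if "i < m'" "j < m'" for i j
    using top' that by (simp add: M_def)
  \<comment> \<open>\<open>\<gamma>\<close> clears row and column \<open>m'\<close> of the upper left block (with half weight on the
    diagonal entry, which receives two contributions); \<open>a\<close> makes the entry \<open>(m', m)\<close> equal to 1\<close>
  define a where "a = 1 / (t^4 * r^2)"
  have "sqrt (t^4) = t^2"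
    by (metis power2_eq_square power_mult_distrib real_sqrt_abs abs_power2 numeral_Bit0 power_add)
  then have a: "a > 0" and sqrt_a: "sqrt a = 1 / (t^2 * r)"
    using t r by (simp_all add: a_def real_sqrt_divide real_sqrt_mult)
  define \<gamma> where "\<gamma> i = - M$$(i,m') / of_real r * (if i = m' then 1/2 else 1)" for i
  define lam where "lam = map l [0..<m'] @ [0]"
  have lam: "lam ! i = (if i < m' then l i else 0)" if "i < m" for i
    using that m' by (auto simp: lam_def nth_append less_Suc_eq)
  have "\<exists>V c. admissible_params (Suc m) a V c (of_real t) \<and>
      act (Suc m) a V c (of_real t) H = normal_form (Suc m) 1 lam"
  proof (rule act_eq_normal_formI[OF H m a U])
    fix i j assume ij: "i < m" "j < m"
    show "cnj (of_real t) * ((U * upper_left m H * transpose_mat U) $$ (i,j) + \<gamma> i * last_col_image m U H j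
        + \<gamma> j * last_col_image m U H i + \<gamma> i * \<gamma> j * H$$(m,m))
      = (if i = j then of_real (lam ! i) else 0)"
    proof (cases "i < m' \<and> j < m'")
      case True
      then show ?thesis unfolding M_def[symmetric] h using top[of i j] ij lam \<beta> by simp
    next
      case False
      then have "i = m' \<or> j = m'" using ij m' by auto
      moreover have "m' < m" using m' by simp
      ultimately show ?thesis unfolding M_def[symmetric] h using ij lam \<beta> r M_sym[of i j]
        by (auto simp: \<gamma>_def field_simps)
    qed
  next
    fix i assume "i < m"
    then show "cnj (of_real t) * (of_real (sqrt a) * of_real t * (last_col_image m U H i + \<gamma> i * H$$(m,m)))
      = (if 1 = 1 \<and> i = m - 1 then 1 else 0)"
      using \<beta> t r m' h by (simp add: sqrt_a field_simps power2_eq_square)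
  qed (use t h in simp_all)
  moreover have "admissible_lambda (Suc m) 1 lam"
    unfolding lam_def m' by (rule admissible_lambda_type1[OF l])
  ultimately show ?thesis by blast
qed

lemma normal_form_exists:
  fixes H :: "complex mat"
  assumes H: "H \<in> carrier_mat (Suc m) (Suc m)" "transpose_mat H = H" and m: "0 < m"
  shows "\<exists>k lam. k \<in> {1, 2, 3} \<and> admissible_lambda (Suc m) k lam \<and>
    (\<exists>a V c d. admissible_params (Suc m) a V c d \<and> act (Suc m) a V c d H = normal_form (Suc m) k lam)"
proof (cases "H$$(m,m) = 0")
  case h: True
  show ?thesis
  proof (cases "\<exists>k0<m. H$$(k0,m) \<noteq> 0")
    case True
    then obtain k0 where "k0 < m" "H$$(k0,m) \<noteq> 0" by blast
    from normal_form_exists_type1[OF H m h this] show ?thesis by blast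
  next
    case False
    then have "\<forall>k<m. H$$(k,m) = 0" by blast
    from normal_form_exists_type2[OF H m h this] show ?thesis by blast
  qed
next
  case False
  from normal_form_exists_type3[OF H m False] show ?thesis by blast
qed

section \<open>Uniqueness of the normal form\<close>

definition normal_form_type :: "nat \<Rightarrow> complex mat \<Rightarrow> nat" where
  "normal_form_type m H = (if H$$(m,m) \<noteq> 0 then 3 else if \<exists>k<m. H$$(k,m) \<noteq> 0 then 1 else 2)"

lemma normal_form_type_unique:
  fixes H :: "complex mat"
  assumes H: "H \<in> carrier_mat (Suc m) (Suc m)" "transpose_mat H = H" and m: "0 < m"
    and adm: "admissible_params (Suc m) a V c d"
    and eq: "act (Suc m) a V c d H = normal_form (Suc m) k lam" and k: "k \<in> {1, 2, 3}"
  shows "k = normal_form_type m H"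
proof -
  note D = act_eq_normal_formD[OF H m adm eq]
  let ?U = "of_real (sqrt a) \<cdot>\<^sub>m V"
  have nz: "cnj d * (of_real (sqrt a) * d) \<noteq> 0" "cnj d * (of_real a * d * d) \<noteq> 0"
    using D(1,3) by auto
  have k3: "k = 3 \<longleftrightarrow> H$$(m,m) \<noteq> 0"
    using D(6) nz(2) by (auto simp: mult.assoc split: if_splits)
  show ?thesis
  proof (cases "H$$(m,m) = 0")
    case h: True
    have col: "cnj d * (of_real (sqrt a) * d) * last_col_image m ?U H i = (if k = 1 \<and> i = m - 1 then 1 else 0)"
      if "i < m" for i
      using D(5)[OF that] h by (simp add: mult.assoc)
    have "k = 1 \<longleftrightarrow> \<not> (\<forall>i<m. last_col_image m ?U H i = 0)"
      using col nz(1) m by (metis diff_less less_one mult_eq_0_iff zero_neq_one)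
    then show ?thesis
      using h k k3 last_col_image_eq_0_iff[OF D(2)] by (auto simp: normal_form_type_def)
  qed (use k3 in \<open>simp add: normal_form_type_def\<close>)
qed

lemma normal_form_congruent_type3:
  fixes H :: "complex mat"
  assumes H: "H \<in> carrier_mat (Suc m) (Suc m)" "transpose_mat H = H" and m: "0 < m"
    and adm: "admissible_params (Suc m) a V c d"
    and eq: "act (Suc m) a V c d H = normal_form (Suc m) 3 lam"
  shows "scaled_unitary_congruent m (schur_complement m H) (mat_diag m (\<lambda>i. of_real (lam ! i)))"
proof -
  note D = act_eq_normal_formD[OF H m adm eq]
  define U where "U = of_real (sqrt a) \<cdot>\<^sub>m V"
  define \<gamma> where "\<gamma> k = of_real (sqrt a) * c $ k" for k
  have Uc: "U \<in> carrier_mat m m" using D(2) unitary_mat_carrier by (simp add: U_def)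
  have h: "H$$(m,m) \<noteq> 0" using D(6) by auto
  have "last_col_image m U H i + \<gamma> i * H$$(m,m) = 0" if "i < m" for i
    using D(5)[OF that, folded U_def \<gamma>_def] D(1,3) by simp
  then have \<gamma>: "\<gamma> i = - last_col_image m U H i / H$$(m,m)" if "i < m" for i
    using that h by (simp add: field_simps add_eq_0_iff)
  have "cnj d \<cdot>\<^sub>m (U * schur_complement m H * transpose_mat U) = mat_diag m (\<lambda>i. of_real (lam ! i))"
  proof (rule eq_matI)
    fix i j assume "i < dim_row (mat_diag m (\<lambda>i. of_real (lam ! i)))"
      "j < dim_col (mat_diag m (\<lambda>i. of_real (lam ! i)))"
    then have ij: "i < m" "j < m" by auto
    have "(U * upper_left m H * transpose_mat U) $$ (i,j) + \<gamma> i * last_col_image m U H j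
        + \<gamma> j * last_col_image m U H i + \<gamma> i * \<gamma> j * H$$(m,m)
        = (U * schur_complement m H * transpose_mat U) $$ (i,j)"
      using h ij by (simp add: index_congruence_schur_complement[OF Uc] \<gamma> field_simps power2_eq_square)
    then show "(cnj d \<cdot>\<^sub>m (U * schur_complement m H * transpose_mat U)) $$ (i,j)
        = mat_diag m (\<lambda>i. of_real (lam ! i)) $$ (i,j)"
      using D(4)[OF ij, folded U_def \<gamma>_def] ij Uc by simp
  qed (use Uc in auto)
  then show ?thesis using D(2,3) by (intro scaled_unitary_congruentI[of m U]) (auto simp: U_def)
qed

lemma normal_form_congruent_type2:
  fixes H :: "complex mat"
  assumes H: "H \<in> carrier_mat (Suc m) (Suc m)" "transpose_mat H = H" and m: "0 < m"
    and adm: "admissible_params (Suc m) a V c d"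
    and eq: "act (Suc m) a V c d H = normal_form (Suc m) 2 lam"
  shows "scaled_unitary_congruent m (upper_left m H) (mat_diag m (\<lambda>i. of_real (lam ! i)))"
proof -
  note D = act_eq_normal_formD[OF H m adm eq]
  define U where "U = of_real (sqrt a) \<cdot>\<^sub>m V"
  have Uc: "U \<in> carrier_mat m m" using D(2) unitary_mat_carrier by (simp add: U_def)
  have "2 = normal_form_type m H" by (rule normal_form_type_unique[OF H m adm eq]) simp
  then have h: "H$$(m,m) = 0" and "\<forall>k<m. H$$(k,m) = 0"
    by (auto simp: normal_form_type_def split: if_splits)
  then have \<beta>: "last_col_image m U H i = 0" for i by (simp add: last_col_image_def)
  have "cnj d \<cdot>\<^sub>m (U * upper_left m H * transpose_mat U) = mat_diag m (\<lambda>i. of_real (lam ! i))"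
  proof (rule eq_matI)
    fix i j assume "i < dim_row (mat_diag m (\<lambda>i. of_real (lam ! i)))"
      "j < dim_col (mat_diag m (\<lambda>i. of_real (lam ! i)))"
    then have ij: "i < m" "j < m" by auto
    show "(cnj d \<cdot>\<^sub>m (U * upper_left m H * transpose_mat U)) $$ (i,j)
        = mat_diag m (\<lambda>i. of_real (lam ! i)) $$ (i,j)"
      using D(4)[OF ij, folded U_def] ij Uc \<beta> h by simp
  qed (use Uc in auto)
  then show ?thesis using D(2,3) by (intro scaled_unitary_congruentI[of m U]) (auto simp: U_def)
qed

lemma normal_form_aligned_type1:
  fixes H :: "complex mat"
  assumes H: "H \<in> carrier_mat (Suc m) (Suc m)" "transpose_mat H = H" and m: "m = Suc m'"
    and adm: "admissible_params (Suc m) a V c d"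
    and eq: "act (Suc m) a V c d H = normal_form (Suc m) 1 lam"
  shows "\<exists>U w. unitary_mat m U \<and> w \<noteq> 0 \<and> (\<forall>i<m'. last_col_image m U H i = 0) \<and>
    last_col_image m U H m' \<noteq> 0 \<and>
    w \<cdot>\<^sub>m upper_left m' (U * upper_left m H * transpose_mat U) = mat_diag m' (\<lambda>i. of_real (lam ! i))"
proof -
  have m0: "0 < m" using m by simp
  note D = act_eq_normal_formD[OF H m0 adm eq]
  define U where "U = of_real (sqrt a) \<cdot>\<^sub>m V"
  have Uc: "U \<in> carrier_mat m m" using D(2) unitary_mat_carrier by (simp add: U_def)
  have "1 = normal_form_type m H" by (rule normal_form_type_unique[OF H m0 adm eq]) simp
  then have h: "H$$(m,m) = 0" by (auto simp: normal_form_type_def split: if_splits)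
  have \<beta>: "cnj d * (of_real (sqrt a) * d) * last_col_image m U H i = (if i = m' then 1 else 0)"
    if "i < m" for i
    using D(5)[OF that, folded U_def] h m by (simp add: mult.assoc)
  have "cnj d * (of_real (sqrt a) * d) \<noteq> 0" using D(1,3) by simp
  then have \<beta>0: "\<forall>i<m'. last_col_image m U H i = 0" and "last_col_image m U H m' \<noteq> 0"
    using \<beta> m by (metis less_SucI mult_eq_0_iff order_less_irrefl, metis lessI mult_zero_right zero_neq_one)
  moreover have "cnj d \<cdot>\<^sub>m upper_left m' (U * upper_left m H * transpose_mat U)
      = mat_diag m' (\<lambda>i. of_real (lam ! i))"
  proof (rule eq_matI)
    fix i j assume "i < dim_row (mat_diag m' (\<lambda>i. of_real (lam ! i)))"
      "j < dim_col (mat_diag m' (\<lambda>i. of_real (lam ! i)))"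
    then have ij: "i < m'" "j < m'" by auto
    have ij': "i < m" "j < m" using ij m by auto
    show "(cnj d \<cdot>\<^sub>m upper_left m' (U * upper_left m H * transpose_mat U)) $$ (i,j)
        = mat_diag m' (\<lambda>i. of_real (lam ! i)) $$ (i,j)"
      using D(4)[OF ij', folded U_def] \<beta>0 ij h by simp
  qed auto
  ultimately show ?thesis using D(2,3) unfolding U_def by blast
qed

lemma aligned_unitaries_upper_left_congruent:
  fixes U1 U2 X :: "complex mat"
  assumes U1: "unitary_mat (Suc m) U1" and U2: "unitary_mat (Suc m) U2"
    and X: "X \<in> carrier_mat (Suc m) (Suc m)"
    and x1: "\<forall>i<m. (\<Sum>k<Suc m. U1$$(i,k) * x k) = 0" "(\<Sum>k<Suc m. U1$$(m,k) * x k) \<noteq> 0"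
    and x2: "\<forall>i<m. (\<Sum>k<Suc m. U2$$(i,k) * x k) = 0"
  shows "\<exists>W. unitary_mat m W \<and>
    upper_left m (U2 * X * transpose_mat U2) = W * upper_left m (U1 * X * transpose_mat U1) * transpose_mat W"
proof -
  have U1c: "U1 \<in> carrier_mat (Suc m) (Suc m)" and U2c: "U2 \<in> carrier_mat (Suc m) (Suc m)"
    using U1 U2 by (auto intro: unitary_mat_carrier)
  have cU1: "conj_transpose U1 \<in> carrier_mat (Suc m) (Suc m)" using U1c by auto
  define W where "W = U2 * conj_transpose U1"
  have W: "unitary_mat (Suc m) W" unfolding W_def
    by (rule unitary_mat_mult[OF U2 unitary_mat_conj_transpose[OF U1]])
  have Wc: "W \<in> carrier_mat (Suc m) (Suc m)" using W by (rule unitary_mat_carrier)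
  define y where "y i = (\<Sum>k<Suc m. U1$$(i,k) * x k)" for i
  have x: "x j = cnj (U1$$(m,j)) * y m" if "j < Suc m" for j
  proof -
    have "(\<Sum>i<Suc m. cnj (U1$$(i,j)) * y i) = (\<Sum>k<Suc m. (\<Sum>i<Suc m. cnj (U1$$(i,j)) * U1$$(i,k)) * x k)"
      unfolding y_def sum_distrib_left sum_distrib_right
      by (subst sum.swap) (simp add: ac_simps)
    also have "\<dots> = x j" using unitary_mat_orthonormal_cols[OF U1 that] that by (simp add: sum_delta_mult)
    finally show ?thesis using x1(1) by (simp add: y_def)
  qed
  have W0: "\<forall>i<m. W$$(i,m) = 0"
  proof (intro allI impI)
    fix i assume i: "i < m"
    have "W$$(i,m) = (\<Sum>j<Suc m. U2$$(i,j) * cnj (U1$$(m,j)))"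
      unfolding W_def using i U1c U2c cU1 by (subst index_mult_sum[of _ "Suc m" "Suc m" _ "Suc m"]) auto
    then have "W$$(i,m) * y m = (\<Sum>j<Suc m. U2$$(i,j) * (cnj (U1$$(m,j)) * y m))"
      by (simp add: sum_distrib_left sum_distrib_right ac_simps del: sum.lessThan_Suc)
    also have "\<dots> = 0" using x x2 i by (simp del: sum.lessThan_Suc)
    finally show "W$$(i,m) = 0" using x1(2) by (simp add: y_def)
  qed
  have "U2 * X * transpose_mat U2 = W * (U1 * X * transpose_mat U1) * transpose_mat W"
    using congruence_mult[OF U2c cU1, of "U1 * X * transpose_mat U1"] unitary_congruence_cancel[OF U1 X] U1c X
    by (simp add: W_def)
  then have "upper_left m (U2 * X * transpose_mat U2)
      = upper_left m W * upper_left m (U1 * X * transpose_mat U1) * transpose_mat (upper_left m W)"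
    using upper_left_congruence[OF Wc _ W0] U1c X by simp
  then show ?thesis using unitary_mat_upper_left[OF W W0] by blast
qed

lemma normalized_diagonal_eq_of_congruent:
  assumes A: "A \<in> carrier_mat m m"
    and A1: "scaled_unitary_congruent m A (mat_diag m (\<lambda>i. of_real (l1 i)))"
    and A2: "scaled_unitary_congruent m A (mat_diag m (\<lambda>i. of_real (l2 i)))"
    and "normalized_diagonal m l1" "normalized_diagonal m l2"
  shows "\<forall>i<m. l1 i = l2 i"
  using scaled_unitary_congruent_diag_eq
    scaled_unitary_congruent_trans[OF mat_diag_dim scaled_unitary_congruent_sym[OF A A1] A2] assms(4,5)
  by blast

lemma normal_form_lambda_unique_type1:
  fixes H :: "complex mat"
  assumes H: "H \<in> carrier_mat (Suc m) (Suc m)" "transpose_mat H = H" and m: "m = Suc m'"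
    and adm1: "admissible_params (Suc m) a1 V1 c1 d1" "admissible_lambda (Suc m) 1 lam1"
    and eq1: "act (Suc m) a1 V1 c1 d1 H = normal_form (Suc m) 1 lam1"
    and adm2: "admissible_params (Suc m) a2 V2 c2 d2" "admissible_lambda (Suc m) 1 lam2"
    and eq2: "act (Suc m) a2 V2 c2 d2 H = normal_form (Suc m) 1 lam2"
  shows "lam1 = lam2"
proof -
  let ?A = "upper_left m H"
  have A: "?A \<in> carrier_mat (Suc m') (Suc m')" using m by simp
  obtain U1 w1 where U1: "unitary_mat m U1" and w1: "w1 \<noteq> 0"
    and x1: "\<forall>i<m'. last_col_image m U1 H i = 0" "last_col_image m U1 H m' \<noteq> 0"
    and D1: "w1 \<cdot>\<^sub>m upper_left m' (U1 * ?A * transpose_mat U1) = mat_diag m' (\<lambda>i. of_real (lam1 ! i))"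
    using normal_form_aligned_type1[OF H m adm1(1) eq1] by blast
  obtain U2 w2 where U2: "unitary_mat m U2" and w2: "w2 \<noteq> 0"
    and x2: "\<forall>i<m'. last_col_image m U2 H i = 0"
    and D2: "w2 \<cdot>\<^sub>m upper_left m' (U2 * ?A * transpose_mat U2) = mat_diag m' (\<lambda>i. of_real (lam2 ! i))"
    using normal_form_aligned_type1[OF H m adm2(1) eq2] by blast
  obtain W where W: "unitary_mat m' W" and
    UW: "upper_left m' (U2 * ?A * transpose_mat U2) = W * upper_left m' (U1 * ?A * transpose_mat U1) * transpose_mat W"
    using aligned_unitaries_upper_left_congruent[of m' U1 U2 ?A "\<lambda>k. H$$(k,m)"] U1 U2 A x1 x2 m
    by (auto simp: last_col_image_def)
  let ?B = "upper_left m' (U1 * ?A * transpose_mat U1)"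
  have "scaled_unitary_congruent m' ?B (mat_diag m' (\<lambda>i. of_real (lam1 ! i)))"
    using D1 w1 by (intro scaled_unitary_congruentI[OF unitary_mat_one]) auto
  moreover have "scaled_unitary_congruent m' ?B (mat_diag m' (\<lambda>i. of_real (lam2 ! i)))"
    using D2 w2 W UW by (intro scaled_unitary_congruentI[OF W]) auto
  moreover have "normalized_diagonal m' (\<lambda>i. lam1 ! i)" "lam1 ! m' = 0"
    "normalized_diagonal m' (\<lambda>i. lam2 ! i)" "lam2 ! m' = 0"
    using normalized_diagonal_of_admissible_type1 adm1(2) adm2(2) m by auto
  ultimately have "\<forall>i<Suc m'. lam1 ! i = lam2 ! i"
    using normalized_diagonal_eq_of_congruent[OF upper_left_carrier] by (auto simp: less_Suc_eq)
  then show ?thesis using adm1(2) adm2(2) m by (auto simp: admissible_lambda_def intro: nth_equalityI)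
qed

lemma normal_form_unique:
  fixes H :: "complex mat"
  assumes H: "H \<in> carrier_mat (Suc m) (Suc m)" "transpose_mat H = H" and m: "0 < m"
    and k1: "k1 \<in> {1, 2, 3}" "admissible_lambda (Suc m) k1 lam1"
    and adm1: "admissible_params (Suc m) a1 V1 c1 d1"
    and eq1: "act (Suc m) a1 V1 c1 d1 H = normal_form (Suc m) k1 lam1"
    and k2: "k2 \<in> {1, 2, 3}" "admissible_lambda (Suc m) k2 lam2"
    and adm2: "admissible_params (Suc m) a2 V2 c2 d2"
    and eq2: "act (Suc m) a2 V2 c2 d2 H = normal_form (Suc m) k2 lam2"
  shows "k1 = k2 \<and> lam1 = lam2"
proof -
  have k: "k1 = k2"
    using normal_form_type_unique[OF H m adm1 eq1 k1(1)] normal_form_type_unique[OF H m adm2 eq2 k2(1)]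
    by simp
  have n: "normalized_diagonal m (\<lambda>i. lam1 ! i)" "normalized_diagonal m (\<lambda>i. lam2 ! i)"
    using normalized_diagonal_of_admissible k1(2) k2(2) by auto
  have len: "length lam1 = m" "length lam2 = m" using k1(2) k2(2) by (auto simp: admissible_lambda_def)
  consider "k1 = 3" | "k1 = 2" | "k1 = 1" using k1(1) by auto
  then have "lam1 = lam2"
  proof cases
    case 1
    then show ?thesis
      using normalized_diagonal_eq_of_congruent[OF schur_complement_carrier
          normal_form_congruent_type3[OF H m adm1] normal_form_congruent_type3[OF H m adm2] n]
        eq1 eq2 k len by (auto intro: nth_equalityI)
  next
    case 2
    then show ?thesis
      using normalized_diagonal_eq_of_congruent[OF upper_left_carrier
          normal_form_congruent_type2[OF H m adm1] normal_form_congruent_type2[OF H m adm2] n]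
        eq1 eq2 k len by (auto intro: nth_equalityI)
  next
    case 3
    obtain m' where m': "m = Suc m'" using m by (cases m) auto
    show ?thesis
      by (rule normal_form_lambda_unique_type1[OF H m' adm1 _ _ adm2])
        (use 3 k k1(2) k2(2) eq1 eq2 in simp_all)
  qed
  with k show ?thesis ..
qed

theorem theorem5p8:
  fixes n :: nat and H :: "complex mat"
  assumes "n \<ge> 2" and "H \<in> carrier_mat n n" and "transpose_mat H = H"
  shows "\<exists>!(k, lam). k \<in> {1, 2, 3} \<and> admissible_lambda n k lam \<and>
           (\<exists>a V c d. admissible_params n a V c d \<and> act n a V c d H = normal_form n k lam)"
proof -
  obtain m where n: "n = Suc m" and m: "0 < m" using assms(1) by (cases n) auto
  have H: "H \<in> carrier_mat (Suc m) (Suc m)" "transpose_mat H = H" using assms(2,3) n by auto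
  let ?P = "\<lambda>(k, lam). k \<in> {1, 2, 3} \<and> admissible_lambda (Suc m) k lam \<and>
    (\<exists>a V c d. admissible_params (Suc m) a V c d \<and> act (Suc m) a V c d H = normal_form (Suc m) k lam)"
  have "\<exists>p. ?P p" using normal_form_exists[OF H m] by simp
  moreover have "p = q" if "?P p" "?P q" for p q
    using that normal_form_unique[OF H m] by (cases p, cases q) blast
  ultimately show ?thesis unfolding n by (rule ex_ex1I)
qed

end
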